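(* Let $T$ be a positive integer and $M$ a complex vector space. Let $A(x_1,x_2)\in M((x_1^{1/T}))((x_2^{1/T}))$, $B(x_2,x_1)\in M((x_2^{1/T}))((x_1^{1/T}))$ and $C(x_2,x_0)\in M((x_2^{1/T}))((x_0))$. Then the following three conditions are equivalent. (1) There is $F\in M[[x_1^{1/T},x_2^{1/T}]][x_1^{-1/T},x_2^{-1/T},(x_1-x_2)^{-1}]$ with $\iota_{x_1,x_2}F=A(x_1,x_2)$, $\iota_{x_2,x_1}F=B(x_2,x_1)$ and $\iota_{x_2,x_1-x_2}F=C(x_2,x_1-x_2)$. (2) There are $C^{[s]}(x_2,x_0)\in M((x_2^{1/T}))((x_0))$, $s=0,\dots,T-1$, with $\sum_{s=0}^{T-1}C^{[s]}=C$ and, for every $s$, $$x_0^{-1}\delta\Big(\frac{x_1-x_2}{x_0}\Big)A(x_1,x_2)^{s,x_1}-x_0^{-1}\delta\Big(\frac{-x_2+x_1}{x_0}\Big)B(x_2,x_1)^{s,x_1}=x_1^{-1}\Big(\frac{x_2+x_0}{x_1}\Big)^{-s/T}\delta\Big(\frac{x_2+x_0}{x_1}\Big)C^{[s]}(x_2,x_0).$$ (3) There are positive integers $l,q$ and $C^{[s]}(x_2,x_0)\in M((x_2^{1/T}))((x_0))$, $s=0,\dots,T-1$, with $\sum_{s}C^{[s]}=C$, $(x_1-x_2)^lA(x_1,x_2)=(x_1-x_2)^lB(x_2,x_1)$ in $M[[x_1^{\pm1/T},x_2^{\pm1/T}]]$, and for every $s$ $$\iota_{x_0,x_2}(x_0+x_2)^{-s/T+q}\big(A(x_1,x_2)^{s,x_1}\big)|_{x_1=x_0+x_2}=\iota_{x_2,x_0}(x_2+x_0)^{-s/T+q}C^{[s]}(x_2,x_0)$$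 in $M[[x_0^{\pm1},x_2^{\pm1/T}]]$. Moreover, in this case $F$ and the $C^{[s]}$ ($s=0,\dots,T-1$) are uniquely determined by $A,B,C$ (and the $C^{[s]}$ in (2) and (3) coincide).
   Context: $M((x^{1/T}))$ denotes series $\sum_{i\in\frac1T\mathbb Z}m_ix^i$ with $m_i=0$ for $i$ sufficiently negative. For a series $X(x_1,x_2)=\sum_{i,j\in\frac1T\mathbb Z}X_{ij}x_1^ix_2^j$ (possibly also multiplied by powers $(x_1-x_2)^k$, $k\in\mathbb Z$), $X^{s,x_1}$ denotes the sub-sum over terms whose exponent $i$ of $x_1$ lies in $s/T+\mathbb Z$. The maps $\iota$ are defined on monomials $c\,x_1^jx_2^k(x_1-x_2)^l$ ($c\in M$, $j,k\in\frac1T\mathbb Z$, $l\in\mathbb Z$) and extended linearly: $\iota_{x_1,x_2}$ gives $\sum_{i\ge0}\binom li(-1)^ic\,x_1^{j+l-i}x_2^{k+i}$; $\iota_{x_2,x_1}$ gives $\sum_{i\ge0}\binom li(-1)^{l-i}c\,x_2^{k+l-i}x_1^{j+i}$; $\iota_{x_2,x_1-x_2}$ gives $\sum_{i\ge0}\binom ji c\,x_2^{k+j-i}(x_1-x_2)^{l+i}$. $\delta(z)=\sum_{n\in\mathbb Z}z^n$, and binomial expressions $(x_2+x_0)^{c}$, $(x_1-x_2)^c$ etc. are expanded in nonnegative integer powers of the second variable; $\iota_{x_0,x_2}$ means expansion in nonnegative powers of $x_2$ and $\iota_{x_2,x_0}$ in nonnegative powers of $x_0$. *)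

theory Defs
  imports "HOL-Analysis.Analysis" "HOL-Library.Groups_Big_Fun"
begin

(* M is a complex vector space given by an abelian group 'm with scalar multiplication
   sc :: complex => 'm => 'm satisfying vector_space sc.
   A series in x1^{1/T}, x2^{1/T} is a function X :: int => int => 'm, X a b being the
   coefficient of x1^{a/T} x2^{b/T}.  A series C(x2,x0) is C :: int => int => 'm, C b n being
   the coefficient of x2^{b/T} x0^n.  Three-variable series (x0 integral, x1,x2 fractional)
   are functions m a b (coefficient of x0^m x1^{a/T} x2^{b/T}).
   Infinite sums that are formally finite are written with Sum_any (sum over the support). *)

(* X i j = coefficient of y^i z^j;  laurent2 X  <->  X in M((y))((z)) *)
definition laurent2 :: "(int \<Rightarrow> int \<Rightarrow> 'm::zero) \<Rightarrow> bool" where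
  "laurent2 X \<longleftrightarrow> (\<exists>N. \<forall>i j. j < N \<longrightarrow> X i j = 0) \<and> (\<forall>j. \<exists>N. \<forall>i. i < N \<longrightarrow> X i j = 0)"

definition psupp :: "(int \<Rightarrow> int \<Rightarrow> 'm::zero) \<Rightarrow> bool" where
  "psupp G \<longleftrightarrow> (\<forall>a b. a < 0 \<or> b < 0 \<longrightarrow> G a b = 0)"

definition proj1 :: "nat \<Rightarrow> nat \<Rightarrow> (int \<Rightarrow> int \<Rightarrow> 'm::zero) \<Rightarrow> int \<Rightarrow> int \<Rightarrow> 'm" where
  "proj1 T s X = (\<lambda>a b. if a mod int T = int s then X a b else 0)"

(* F = x1^{-p/T} x2^{-r/T} (x1-x2)^{-k} G, G a power series.
   Images of F under the three iota maps. *)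
definition iota12 :: "(complex \<Rightarrow> 'm \<Rightarrow> 'm) \<Rightarrow> nat \<Rightarrow> (int \<Rightarrow> int \<Rightarrow> 'm::ab_group_add)
    \<Rightarrow> nat \<Rightarrow> nat \<Rightarrow> nat \<Rightarrow> int \<Rightarrow> int \<Rightarrow> 'm" where
  "iota12 sc T G p r k = (\<lambda>\<alpha> \<beta>. Sum_any (\<lambda>i::nat.
      sc ((-1)^i * ((- of_nat k) gchoose i))
         (G (\<alpha> + int p + int T * (int k + int i)) (\<beta> + int r - int T * int i))))"

definition iota21 :: "(complex \<Rightarrow> 'm \<Rightarrow> 'm) \<Rightarrow> nat \<Rightarrow> (int \<Rightarrow> int \<Rightarrow> 'm::ab_group_add)
    \<Rightarrow> nat \<Rightarrow> nat \<Rightarrow> nat \<Rightarrow> int \<Rightarrow> int \<Rightarrow> 'm" where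
  "iota21 sc T G p r k = (\<lambda>\<alpha> \<beta>. Sum_any (\<lambda>i::nat.
      sc ((-1)^(k + i) * ((- of_nat k) gchoose i))
         (G (\<alpha> + int p - int T * int i) (\<beta> + int r + int T * (int k + int i)))))"

(* result indexed (x2-exponent * T, x0-exponent) with x0 = x1 - x2 *)
definition iota2d :: "(complex \<Rightarrow> 'm \<Rightarrow> 'm) \<Rightarrow> nat \<Rightarrow> (int \<Rightarrow> int \<Rightarrow> 'm::ab_group_add)
    \<Rightarrow> nat \<Rightarrow> nat \<Rightarrow> nat \<Rightarrow> int \<Rightarrow> int \<Rightarrow> 'm" where
  "iota2d sc T G p r k = (\<lambda>\<beta> n. if n + int k < 0 then 0 else Sum_any (\<lambda>a::int.
      sc ((of_int (a - int p) / of_nat T) gchoose nat (n + int k))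
         (G a (\<beta> + int r + int p + int T * (n + int k) - a))))"

(* coefficients of x1^{p/T} x2^{r/T} (x1-x2)^k X *)
definition polymul :: "(complex \<Rightarrow> 'm \<Rightarrow> 'm) \<Rightarrow> nat \<Rightarrow> (int \<Rightarrow> int \<Rightarrow> 'm::ab_group_add)
    \<Rightarrow> nat \<Rightarrow> nat \<Rightarrow> nat \<Rightarrow> int \<Rightarrow> int \<Rightarrow> 'm" where
  "polymul sc T X p r k = (\<lambda>a b. \<Sum>i\<le>k.
      sc ((-1)^i * of_nat (k choose i))
         (X (a - int p - int T * (int k - int i)) (b - int r - int T * int i)))"

(* equality of two elements of M[[x1^{1/T},x2^{1/T}]][x1^{-1/T},x2^{-1/T},(x1-x2)^{-1}] *)
definition Feq :: "(complex \<Rightarrow> 'm \<Rightarrow> 'm) \<Rightarrow> nat \<Rightarrow> (int \<Rightarrow> int \<Rightarrow> 'm::ab_group_add) \<Rightarrow> nat \<Rightarrow> nat \<Rightarrow> nat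
    \<Rightarrow> (int \<Rightarrow> int \<Rightarrow> 'm) \<Rightarrow> nat \<Rightarrow> nat \<Rightarrow> nat \<Rightarrow> bool" where
  "Feq sc T G p r k G' p' r' k' \<longleftrightarrow> polymul sc T G p' r' k' = polymul sc T G' p r k"

(* x0^{-1} delta((x1-x2)/x0) X(x1,x2), indexed (x0-exp, T*x1-exp, T*x2-exp) *)
definition deltaA :: "(complex \<Rightarrow> 'm \<Rightarrow> 'm) \<Rightarrow> nat \<Rightarrow> (int \<Rightarrow> int \<Rightarrow> 'm::ab_group_add)
    \<Rightarrow> int \<Rightarrow> int \<Rightarrow> int \<Rightarrow> 'm" where
  "deltaA sc T X = (\<lambda>m \<alpha> \<beta>. let n = - m - 1 in Sum_any (\<lambda>i::nat.
      sc ((-1)^i * (of_int n gchoose i))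
         (X (\<alpha> - int T * (n - int i)) (\<beta> - int T * int i))))"

(* x0^{-1} delta((-x2+x1)/x0) Y(x2,x1), Y stored as Y (T*x1-exp) (T*x2-exp) *)
definition deltaB :: "(complex \<Rightarrow> 'm \<Rightarrow> 'm) \<Rightarrow> nat \<Rightarrow> (int \<Rightarrow> int \<Rightarrow> 'm::ab_group_add)
    \<Rightarrow> int \<Rightarrow> int \<Rightarrow> int \<Rightarrow> 'm" where
  "deltaB sc T Y = (\<lambda>m \<alpha> \<beta>. let n = - m - 1 in Sum_any (\<lambda>i::nat.
      sc ((-1) powi (n - int i) * (of_int n gchoose i))
         (Y (\<alpha> - int T * int i) (\<beta> - int T * (n - int i)))))"

(* x1^{-1} ((x2+x0)/x1)^{-s/T} delta((x2+x0)/x1) C(x2,x0) *)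
definition deltaC :: "(complex \<Rightarrow> 'm \<Rightarrow> 'm) \<Rightarrow> nat \<Rightarrow> nat \<Rightarrow> (int \<Rightarrow> int \<Rightarrow> 'm::ab_group_add)
    \<Rightarrow> int \<Rightarrow> int \<Rightarrow> int \<Rightarrow> 'm" where
  "deltaC sc T s C = (\<lambda>m \<alpha> \<beta>. if (\<alpha> - int s) mod int T \<noteq> 0 then 0 else
      (let n = - ((\<alpha> - int s) div int T) - 1 in Sum_any (\<lambda>i::nat.
        sc ((of_int n - of_nat s / of_nat T) gchoose i)
           (C (\<beta> - (int T * n - int s - int T * int i)) (m - int i)))))"

(* iota_{x0,x2} (x0+x2)^{-s/T+q} X(x1,x2)|_{x1=x0+x2}, X supported on x1-exponents in s/T+Z;
   indexed (x0-exp, T*x2-exp) *)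
definition substA :: "(complex \<Rightarrow> 'm \<Rightarrow> 'm) \<Rightarrow> nat \<Rightarrow> nat \<Rightarrow> nat \<Rightarrow> (int \<Rightarrow> int \<Rightarrow> 'm::ab_group_add)
    \<Rightarrow> int \<Rightarrow> int \<Rightarrow> 'm" where
  "substA sc T s q X = (\<lambda>m \<gamma>. Sum_any (\<lambda>j::nat.
      sc (of_int (m + int j) gchoose j)
         (X (int T * (m + int j - int q) + int s) (\<gamma> - int T * int j))))"

(* iota_{x2,x0} (x2+x0)^{-s/T+q} C(x2,x0); indexed (x0-exp, T*x2-exp) *)
definition expC :: "(complex \<Rightarrow> 'm \<Rightarrow> 'm) \<Rightarrow> nat \<Rightarrow> nat \<Rightarrow> nat \<Rightarrow> (int \<Rightarrow> int \<Rightarrow> 'm::ab_group_add)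
    \<Rightarrow> int \<Rightarrow> int \<Rightarrow> 'm" where
  "expC sc T s q C = (\<lambda>m \<gamma>. Sum_any (\<lambda>j::nat.
      sc ((of_nat q - of_nat s / of_nat T) gchoose j)
         (C (\<gamma> - (int T * int q - int s - int T * int j)) (m - int j))))"

(* condition (1) for a given representative of F *)
definition isF :: "(complex \<Rightarrow> 'm \<Rightarrow> 'm) \<Rightarrow> nat \<Rightarrow> (int \<Rightarrow> int \<Rightarrow> 'm::ab_group_add)
    \<Rightarrow> (int \<Rightarrow> int \<Rightarrow> 'm) \<Rightarrow> (int \<Rightarrow> int \<Rightarrow> 'm) \<Rightarrow> (int \<Rightarrow> int \<Rightarrow> 'm) \<Rightarrow> nat \<Rightarrow> nat \<Rightarrow> nat \<Rightarrow> bool" where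
  "isF sc T A B C G p r k \<longleftrightarrow> psupp G \<and> iota12 sc T G p r k = A \<and> iota21 sc T G p r k = B
      \<and> iota2d sc T G p r k = C"

definition isC2 :: "(complex \<Rightarrow> 'm \<Rightarrow> 'm) \<Rightarrow> nat \<Rightarrow> (int \<Rightarrow> int \<Rightarrow> 'm::ab_group_add)
    \<Rightarrow> (int \<Rightarrow> int \<Rightarrow> 'm) \<Rightarrow> (int \<Rightarrow> int \<Rightarrow> 'm) \<Rightarrow> (nat \<Rightarrow> int \<Rightarrow> int \<Rightarrow> 'm) \<Rightarrow> bool" where
  "isC2 sc T A B C Cs \<longleftrightarrow> (\<forall>s<T. laurent2 (Cs s)) \<and> (\<lambda>b n. \<Sum>s<T. Cs s b n) = C \<and>
      (\<forall>s<T. (\<lambda>m \<alpha> \<beta>. deltaA sc T (proj1 T s A) m \<alpha> \<beta> - deltaB sc T (proj1 T s B) m \<alpha> \<beta>)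
              = deltaC sc T s (Cs s))"

definition isC3 :: "(complex \<Rightarrow> 'm \<Rightarrow> 'm) \<Rightarrow> nat \<Rightarrow> (int \<Rightarrow> int \<Rightarrow> 'm::ab_group_add)
    \<Rightarrow> (int \<Rightarrow> int \<Rightarrow> 'm) \<Rightarrow> (int \<Rightarrow> int \<Rightarrow> 'm) \<Rightarrow> (nat \<Rightarrow> int \<Rightarrow> int \<Rightarrow> 'm) \<Rightarrow> bool" where
  "isC3 sc T A B C Cs \<longleftrightarrow> (\<exists>l q. l > 0 \<and> q > 0 \<and>
      (\<forall>s<T. laurent2 (Cs s)) \<and> (\<lambda>b n. \<Sum>s<T. Cs s b n) = C \<and>
      polymul sc T A 0 0 l = polymul sc T B 0 0 l \<and>
      (\<forall>s<T. substA sc T s q (proj1 T s A) = expC sc T s q (Cs s)))"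

end

theory Submission
  imports Defs
begin

text \<open>
  An element F = x1^{-p/T} x2^{-r/T} (x1-x2)^{-k} G of the localised ring
  M[[x1^{1/T},x2^{1/T}]][x1^{-1/T},x2^{-1/T},(x1-x2)^{-1}] is represented by a power series G
  (psupp G) and exponents p, r, k.

  Every series occurring in conditions (1)-(3) is a diagonal transform of
  G: each of its coefficients is a finite sum  \<Sum>u w(u) G(a0 + T u, b0 - T u)  along an
  anti-diagonal, with a scalar weight w(u) depending only on the x0-exponent.  Hence
  \<^item> the Jacobi identity (2) for the s-th component of F reduces to the binomial identity
    w12 - w21 = wC between three weights (delta_weights);
  \<^item> condition (3) for F reduces to the symmetry of binomial coefficients (substA_iota12_expC);
  \<^item> (2) implies locality  (x1-x2)^l A = (x1-x2)^l B  (read off the x0^{-l-1}-coefficient), and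
    locality produces the power series G = x1^{p/T} x2^{r/T} (x1-x2)^l A  (locality_gives_F);
  \<^item> the components C^[s] are recovered from (2) or (3) since C \<mapsto> deltaC and C \<mapsto> expC are
    injective on Laurent series (they are triangular in the x0-exponent); this gives uniqueness.
\<close>

section \<open>Weights and the candidate components\<close>

text \<open>Weights of the three delta-function terms of the Jacobi identity on an anti-diagonal, as
  functions of N = -m-1-k (m the x0-exponent, k the pole order along x1 = x2) and of the
  diagonal index u.\<close>

definition w12 :: "int \<Rightarrow> int \<Rightarrow> complex" where
  "w12 N u = (if 0 \<le> u then (-1)^nat u * (of_int N gchoose nat u) else 0)"

definition w21 :: "int \<Rightarrow> int \<Rightarrow> complex" where
  "w21 N u = (if u \<le> N then (-1) powi u * (of_int N gchoose nat (N - u)) else 0)"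

definition wC :: "int \<Rightarrow> int \<Rightarrow> complex" where
  "wC N u = (if N < 0 then of_int (u - N - 1) gchoose nat (-N-1) else 0)"

text \<open>The components C^[s] = iota_{x2,x1-x2} of the s-th x1-residue part of F.\<close>

definition CsF :: "(complex \<Rightarrow> 'm \<Rightarrow> 'm) \<Rightarrow> nat \<Rightarrow> (int \<Rightarrow> int \<Rightarrow> 'm::ab_group_add)
    \<Rightarrow> nat \<Rightarrow> nat \<Rightarrow> nat \<Rightarrow> nat \<Rightarrow> int \<Rightarrow> int \<Rightarrow> 'm" where
  "CsF sc T G p r k = (\<lambda>s. iota2d sc T (proj1 T ((s + p) mod T) G) p r k)"

section \<open>Binomial and sign identities\<close>

lemma signed_vandermonde:
  "(\<Sum>i\<le>u. ((-1)^i * ((a::complex) gchoose i)) * ((-1)^(u-i) * (b gchoose (u-i))))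
     = (-1)^u * ((a+b) gchoose u)"
proof -
  have "(\<Sum>i\<le>u. ((-1)^i * (a gchoose i)) * ((-1)^(u-i) * (b gchoose (u-i))))
      = (\<Sum>i\<le>u. (-1)^u * ((a gchoose i) * (b gchoose (u-i))))"
  proof (rule sum.cong)
    fix i assume "i \<in> {..u}"
    then have "(-1::complex)^i * (-1)^(u-i) = (-1)^u"
      by (simp flip: power_add)
    then show "((-1)^i * (a gchoose i)) * ((-1)^(u-i) * (b gchoose (u-i)))
        = (-1)^u * ((a gchoose i) * (b gchoose (u-i)))"
      by (metis (no_types, lifting) mult.assoc mult.left_commute)
  qed simp
  also have "\<dots> = (-1)^u * ((a+b) gchoose u)"
    by (simp add: sum_distrib_left[symmetric] atMost_atLeast0 gbinomial_Vandermonde)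
  finally show ?thesis .
qed

lemma gchoose_int_nonneg: "0 \<le> z \<Longrightarrow> (of_int z :: complex) gchoose j = of_nat (nat z choose j)"
  by (metis binomial_gbinomial of_int_of_nat_eq int_nat_eq)

lemma gchoose_int_neg:
  "z < 0 \<Longrightarrow> (of_int z :: complex) gchoose j = (-1)^j * of_nat (nat (int j - z - 1) choose j)"
proof -
  assume z: "z < 0"
  have "(of_int z :: complex) gchoose j = (-1)^j * ((of_nat j - of_int z - 1) gchoose j)"
    by (rule gbinomial_negated_upper)
  also have "(of_nat j - of_int z - 1 :: complex) = of_int (int j - z - 1)" by simp
  also have "(of_int (int j - z - 1) :: complex) gchoose j = of_nat (nat (int j - z - 1) choose j)"
    using z by (intro gchoose_int_nonneg) simp
  finally show ?thesis .
qed

lemma choose_sym: "a + b = n \<Longrightarrow> (n choose a) = (n choose b)"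
  by (metis binomial_symmetric add_diff_cancel_left' le_add1)

lemma powi_minus_one: "((-1::complex) powi z) = (if even z then 1 else -1)"
  by (simp add: power_int_minus_left)

lemma power_minus_one: "((-1::complex) ^ n) = (if even n then 1 else -1)"
  by (simp add: minus_one_power_iff)

lemma powi_minus_one_nonneg: "0 \<le> u \<Longrightarrow> ((-1::complex) powi u) = (-1)^nat u"
  by (simp add: power_int_def)

text \<open>Coefficient convolutions arising when delta-functions are applied to the expansions
  iota12 and iota21.\<close>

lemma conv_iota12:
  "(\<Sum>i\<le>u. ((-1)^i * (of_int n gchoose i)) * ((-1)^(u-i) * ((- of_nat k) gchoose (u-i))))
     = (-1)^u * ((of_int (n - int k) :: complex) gchoose u)"
  by (subst signed_vandermonde) simp

lemma conv_iota21:
  "(\<Sum>i\<le>u. ((-1) powi (n - int i) * (of_int n gchoose i)) *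
            ((-1)^(k + (u-i)) * ((- of_nat k) gchoose (u-i))))
     = (-1) powi (n + int k + int u) * ((of_int (n - int k) :: complex) gchoose u)"
proof -
  have "(\<Sum>i\<le>u. ((-1) powi (n - int i) * (of_int n gchoose i)) *
            ((-1)^(k + (u-i)) * ((- of_nat k) gchoose (u-i))))
      = (\<Sum>i\<le>u. ((-1) powi (n + int k + int u) * (-1)^u) * ((-1)^i * (of_int n gchoose i) *
            ((-1)^(u-i) * ((- of_nat k :: complex) gchoose (u-i)))))"
  proof (rule sum.cong)
    fix i assume "i \<in> {..u}"
    then have iu: "i \<le> u" by simp
    have "((-1::complex) powi (n - int i)) * (-1)^(k + (u-i))
        = (-1) powi (n + int k + int u) * (-1)^u * ((-1)^i * (-1)^(u-i))"
      using iu by (auto simp: powi_minus_one power_minus_one even_add even_diff of_nat_diff)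
    then show "((-1) powi (n - int i) * (of_int n gchoose i)) *
            ((-1)^(k + (u-i)) * ((- of_nat k) gchoose (u-i)))
        = ((-1) powi (n + int k + int u) * (-1)^u) * ((-1)^i * (of_int n gchoose i) *
            ((-1)^(u-i) * ((- of_nat k :: complex) gchoose (u-i))))"
      by (simp add: algebra_simps)
  qed simp
  also have "\<dots> = (-1) powi (n + int k + int u)
      * ((-1)^u * (-1)^u * ((of_int (n - int k) :: complex) gchoose u))"
    by (simp add: sum_distrib_left[symmetric] conv_iota12)
  also have "(-1::complex)^u * (-1)^u = 1" by (simp flip: power_add)
  finally show ?thesis by simp
qed

text \<open>(1-x)^k and (1-x)^{-k} are mutually inverse power series (in both orders and with
  the sign twist occurring in iota21).\<close>

lemma conv_inverse:
  "(\<Sum>i\<le>u. ((-1)^i * of_nat (k choose i)) * ((-1)^(u-i) * ((- of_nat k) gchoose (u-i))))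
     = (if u = 0 then 1 else (0::complex))"
  by (simp add: binomial_gbinomial signed_vandermonde gbinomial_0_left)

lemma conv_inverse':
  "(\<Sum>i\<le>u. ((-1)^i * ((- of_nat k) gchoose i)) * ((-1)^(u-i) * of_nat (k choose (u-i))))
     = (if u = 0 then 1 else (0::complex))"
  by (simp add: binomial_gbinomial signed_vandermonde gbinomial_0_left)

lemma conv_inverse_signed:
  "(\<Sum>i\<le>u. ((-1)^(k+i) * ((- of_nat k) gchoose i)) * ((-1)^k * (-1)^(u-i) * of_nat (k choose (u-i))))
     = (if u = 0 then 1 else (0::complex))"
proof -
  have "(\<Sum>i\<le>u. ((-1)^(k+i) * ((- of_nat k) gchoose i)) * ((-1)^k * (-1)^(u-i) * of_nat (k choose (u-i))))
     = (\<Sum>i\<le>u. ((-1)^k*(-1)^k) * (((-1)^i * ((- of_nat k) gchoose i)) * ((-1)^(u-i) * of_nat (k choose (u-i)))))"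
    by (rule sum.cong) (simp_all add: power_add algebra_simps)
  also have "(-1::complex)^k*(-1)^k = 1" by (simp flip: power_add)
  finally show ?thesis by (simp add: conv_inverse')
qed

text \<open>Coefficient convolution for the substitution x1 = x0 + x2 applied to iota12.\<close>

lemma conv_substitution:
  "(\<Sum>j\<le>u. ((of_int (m + int j) :: complex) gchoose j) * ((-1)^(u-j) * ((- of_nat k) gchoose (u-j))))
     = of_int (m + int k + int u) gchoose u"
proof -
  have e1: "((of_int (m + int j) :: complex) gchoose j) = (-1)^j * (of_int (-m-1) gchoose j)" for j
    by (subst gbinomial_negated_upper) simp
  have e2: "((of_int (m + int k + int u) :: complex) gchoose u)
      = (-1)^u * (of_int (-m-1) + (- of_nat k) gchoose u)"
    by (subst gbinomial_negated_upper) (simp add: algebra_simps)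
  show ?thesis
    unfolding e1 e2 by (rule signed_vandermonde)
qed

text \<open>Symmetry  (n choose u) = (n choose M)  for n = M + u > 0, written with the conventions
  of substA (left) and expC (right).\<close>

lemma gchoose_int_symmetric:
  assumes pos: "0 < M + u"
  shows "(if 0 \<le> u then (of_int (M + u) :: complex) gchoose nat u else 0)
       = (if M < 0 then 0 else (of_int (M + u) :: complex) gchoose nat M)"
proof -
  have g: "(of_int (M + u) :: complex) gchoose j = of_nat (nat (M+u) choose j)" for j
    using pos by (intro gchoose_int_nonneg) simp
  consider "0 \<le> u" "0 \<le> M" | "0 \<le> u" "M < 0" | "u < 0" "0 \<le> M" | "u < 0" "M < 0" by linarith
  then show ?thesis
  proof cases
    case 1
    have "nat u + nat M = nat (M + u)" using 1 by simp
    then have "nat (M + u) choose nat u = nat (M + u) choose nat M" by (rule choose_sym)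
    then show ?thesis using 1 unfolding g by simp
  next
    case 2
    have "nat (M + u) < nat u" using 2 pos by simp
    then show ?thesis using 2 unfolding g by (simp add: binomial_eq_0)
  next
    case 3
    have "nat (M + u) < nat M" using 3 pos by simp
    then show ?thesis using 3 unfolding g by (simp add: binomial_eq_0)
  next
    case 4 then show ?thesis using pos by simp
  qed
qed

text \<open>The weight identity behind the Jacobi identity:  x0^{-1} delta((x1-x2)/x0) -
  x0^{-1} delta((x2-x1)/-x0) = x1^{-1} delta((x2+x0)/x1), coefficientwise on a diagonal.\<close>

lemma delta_weights_nonneg:
  assumes N: "0 \<le> N"
  shows "w12 N u - w21 N u = wC N u"
proof -
  consider "u < 0" | "0 \<le> u \<and> u \<le> N" | "N < u" by linarith
  then show ?thesis
  proof cases
    case 1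
    have "nat N < nat (N - u)" using 1 N by simp
    then show ?thesis using 1 N
      by (simp add: w12_def w21_def wC_def gchoose_int_nonneg binomial_eq_0)
  next
    case 2
    have "nat N choose nat (N - u) = nat N choose nat u"
      using 2 binomial_symmetric[of "nat u" "nat N"] nat_mono[of u N] by (simp add: nat_diff_distrib)
    then show ?thesis using 2 N
      by (simp add: w12_def w21_def wC_def gchoose_int_nonneg powi_minus_one_nonneg)
  next
    case 3
    have "nat N < nat u" using 3 N by simp
    then show ?thesis using 3 N
      by (simp add: w12_def w21_def wC_def gchoose_int_nonneg binomial_eq_0)
  qed
qed

lemma delta_weights_neg:
  assumes N: "N < 0"
  shows "w12 N u - w21 N u = wC N u"
proof -
  define P where "P = nat (-N-1)"
  have wc: "wC N u = of_int (u - N - 1) gchoose P" using N by (simp add: wC_def P_def)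
  consider "0 \<le> u" | "u \<le> N" | "N < u \<and> u < 0" by linarith
  then show ?thesis
  proof cases
    case 1
    have "w12 N u = (-1)^nat u * ((-1)^nat u * of_nat (nat (int (nat u) - N - 1) choose nat u))"
      using 1 N by (simp add: w12_def gchoose_int_neg)
    also have "(-1::complex)^nat u * ((-1)^nat u * x) = x" for x
      by (simp add: mult.assoc[symmetric] power_add[symmetric])
    finally have "w12 N u = of_nat (nat (u - N - 1) choose nat u)" using 1 by simp
    moreover have "nat u + P = nat (u - N - 1)"
      using 1 N unfolding P_def by (simp add: nat_add_distrib[symmetric])
    moreover have "wC N u = of_nat (nat (u - N - 1) choose P)"
      unfolding wc by (rule gchoose_int_nonneg) (use 1 N in simp)
    ultimately show ?thesis
      using 1 N choose_sym[of "nat u" P] by (simp add: w21_def)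
  next
    case 2
    have b: "w21 N u = (-1) powi u * ((-1)^nat (N-u) * of_nat (nat (- u - 1) choose nat (N - u)))"
      using 2 N by (simp add: w21_def gchoose_int_neg)
    have c: "wC N u = (-1)^P * of_nat (nat (- u - 1) choose P)"
      unfolding wc by (subst gchoose_int_neg) (use 2 N in \<open>simp_all add: P_def\<close>)
    have "nat (N - u) + P = nat (- u - 1)"
      using 2 N unfolding P_def by (simp add: nat_add_distrib[symmetric])
    then have d: "nat (- u - 1) choose nat (N - u) = nat (- u - 1) choose P"
      by (rule choose_sym)
    have e: "- ((-1::complex) powi u * (-1)^nat (N-u)) = (-1)^P"
      using 2 N by (auto simp: powi_minus_one power_minus_one P_def even_nat_iff even_add even_diff)
    have "w12 N u - w21 N u = - ((-1) powi u * (-1)^nat (N-u)) * of_nat (nat (- u - 1) choose P)"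
      using 2 N b d by (simp add: w12_def algebra_simps)
    then show ?thesis using c e by simp
  next
    case 3
    have "wC N u = of_nat (nat (u - N - 1) choose P)"
      unfolding wc by (rule gchoose_int_nonneg) (use 3 N in simp)
    moreover have "nat (u - N - 1) < P" using 3 N by (simp add: P_def)
    ultimately show ?thesis using 3 N by (simp add: w12_def w21_def binomial_eq_0)
  qed
qed

lemma delta_weights: "w12 N u - w21 N u = wC N u"
  using delta_weights_nonneg delta_weights_neg by (cases "0 \<le> N") auto

section \<open>Supports, residue classes and reindexing\<close>

lemma sum_reflect: "(\<Sum>i\<le>l. f i) = (\<Sum>i\<le>(l::nat). f (l - i))"
  by (rule sum.reindex_bij_witness[where i="\<lambda>i. l - i" and j="\<lambda>i. l - i"]) auto

lemma Sum_any_reindex: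
  fixes f :: "'b \<Rightarrow> 'c::comm_monoid_add" and g :: "'a \<Rightarrow> 'b"
  assumes inj: "inj g" and rng: "\<forall>x. f x \<noteq> 0 \<longrightarrow> x \<in> range g"
  shows "Sum_any f = Sum_any (\<lambda>y. f (g y))"
proof -
  have S: "{x. f x \<noteq> 0} = g ` {y. f (g y) \<noteq> 0}"
    using rng by auto
  show ?thesis
  proof (cases "finite {y. f (g y) \<noteq> 0}")
    case True
    have "Sum_any f = sum f (g ` {y. f (g y) \<noteq> 0})"
      by (simp add: Sum_any.expand_set S)
    also have "\<dots> = sum (\<lambda>y. f (g y)) {y. f (g y) \<noteq> 0}"
      by (rule sum.reindex[unfolded comp_def]) (use inj in \<open>auto intro: inj_on_subset\<close>)
    also have "\<dots> = Sum_any (\<lambda>y. f (g y))"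
      by (simp add: Sum_any.expand_set)
    finally show ?thesis .
  next
    case False
    then have "\<not> finite {x. f x \<noteq> 0}"
      unfolding S using finite_imageD inj inj_on_subset by blast
    then show ?thesis using False by simp
  qed
qed

lemma psupp_nz: "psupp H \<Longrightarrow> H a b \<noteq> 0 \<Longrightarrow> 0 \<le> a \<and> 0 \<le> b"
  unfolding psupp_def by (meson not_le)

lemma diag_vanish:
  assumes X: "\<forall>i j. j < N \<longrightarrow> X i j = 0" and T: "T > 0"
  shows "\<forall>u > nat (b - N). X (f u) (b - int T * int u) = 0"
proof (intro allI impI)
  fix u assume u: "nat (b - N) < u"
  have "1 * int u \<le> int T * int u" using T by (intro mult_right_mono) auto
  then have "b - int T * int u < N" using u by linarith
  then show "X (f u) (b - int T * int u) = 0" using X by blast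
qed

lemma diag_vanish_fst:
  assumes X: "\<forall>i j. i < N \<longrightarrow> X i j = 0" and T: "T > 0"
  shows "\<forall>u > nat (b - N). X (b - int T * int u) (f u) = 0"
  using diag_vanish[of N "\<lambda>j i. X i j" T b f] assms by blast

lemma psupp_diag_vanish:
  "psupp G \<Longrightarrow> T > 0 \<Longrightarrow> \<forall>u > nat b. G (f u) (b - int T * int u) = 0"
  using diag_vanish[of 0 G T b f] by (simp add: psupp_def)

lemma psupp_diag_vanish_fst:
  "psupp G \<Longrightarrow> T > 0 \<Longrightarrow> \<forall>u > nat b. G (b - int T * int u) (f u) = 0"
  using diag_vanish_fst[of 0 G T b f] by (simp add: psupp_def)

lemma diag_finite:
  assumes H: "psupp H" and T: "T > 0"
  shows "\<forall>u. H (a0 + int T * u) (b0 - int T * u) \<noteq> 0 \<longrightarrow> u \<in> {-\<bar>a0\<bar>..\<bar>b0\<bar>}"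
proof (intro allI impI)
  fix u assume "H (a0 + int T * u) (b0 - int T * u) \<noteq> 0"
  then have a: "0 \<le> a0 + int T * u" and b: "0 \<le> b0 - int T * u"
    using psupp_nz[OF H, of "a0 + int T * u" "b0 - int T * u"] by auto
  have T1: "1 \<le> int T" using T by simp
  have "-\<bar>a0\<bar> \<le> u"
  proof (rule ccontr)
    assume "\<not> -\<bar>a0\<bar> \<le> u"
    then have "int T * u \<le> 1 * u" by (intro mult_right_mono_neg T1) auto
    then show False using a \<open>\<not> -\<bar>a0\<bar> \<le> u\<close> by linarith
  qed
  moreover have "u \<le> \<bar>b0\<bar>"
  proof (rule ccontr)
    assume "\<not> u \<le> \<bar>b0\<bar>"
    then have "1 * u \<le> int T * u" by (intro mult_right_mono T1) auto
    then show False using b \<open>\<not> u \<le> \<bar>b0\<bar>\<close> by linarith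
  qed
  ultimately show "u \<in> {-\<bar>a0\<bar>..\<bar>b0\<bar>}" by simp
qed

lemma residue_shift_iff:
  assumes "0 < T" "s < T"
  shows "((x + int p + int T * y) mod int T = int ((s + p) mod T)) \<longleftrightarrow> (x mod int T = int s)"
proof -
  have "((x + int p + int T * y) mod int T = int ((s + p) mod T))
      \<longleftrightarrow> ((x + int p) mod int T = (int s + int p) mod int T)"
    by (simp add: of_nat_mod mod_mult_self2 add.assoc[symmetric])
  also have "\<dots> \<longleftrightarrow> int T dvd (x - int s)" by (simp add: mod_eq_dvd_iff)
  also have "\<dots> \<longleftrightarrow> x mod int T = int s mod int T" by (simp add: mod_eq_dvd_iff)
  also have "int s mod int T = int s" using assms by simp
  finally show ?thesis .
qed

lemma Sum_any_residue_class:
  fixes H :: "int \<Rightarrow> int \<Rightarrow> 'm::comm_monoid_add"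
  assumes T: "T > 0" and hom: "\<forall>a b. H a b \<noteq> 0 \<longrightarrow> a mod int T = a0 mod int T"
    and f0: "\<And>a. f a 0 = 0"
  shows "Sum_any (\<lambda>a. f a (H a (S - a))) = Sum_any (\<lambda>u. f (a0 + int T * u) (H (a0 + int T * u) (S - (a0 + int T * u))))"
proof (rule Sum_any_reindex)
  show "inj (\<lambda>u. a0 + int T * u)" using T by (auto simp: inj_on_def)
  show "\<forall>x. f x (H x (S - x)) \<noteq> 0 \<longrightarrow> x \<in> range (\<lambda>u. a0 + int T * u)"
  proof (intro allI impI)
    fix x assume "f x (H x (S - x)) \<noteq> 0"
    then have "H x (S - x) \<noteq> 0" using f0 by force
    then have "x mod int T = a0 mod int T" using hom by blast
    then have "x = a0 + int T * ((x - a0) div int T)"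
      by (metis add.commute diff_add_cancel mod_eq_dvd_iff dvd_mult_div_cancel)
    then show "x \<in> range (\<lambda>u. a0 + int T * u)" by blast
  qed
qed

lemma proj_hom: "\<forall>a b. proj1 T t G a b \<noteq> 0 \<longrightarrow> a mod int T = int t"
  by (simp add: proj1_def)

lemma proj_psupp: "psupp G \<Longrightarrow> psupp (proj1 T t G)"
  by (simp add: psupp_def proj1_def)

lemma proj_ext:
  assumes T: "0 < T" and eq: "\<forall>s<T. proj1 T s X = proj1 T s Y"
  shows "X = Y"
proof (intro ext)
  fix a b
  define s where "s = nat (a mod int T)"
  have sT: "s < T" using T unfolding s_def by (simp add: nat_less_iff)
  have as: "a mod int T = int s" using T unfolding s_def by simp
  have "proj1 T s X a b = proj1 T s Y a b" using eq sT by simp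
  then show "X a b = Y a b" using as by (simp add: proj1_def)
qed

lemma sum_proj: "0 < T \<Longrightarrow> (\<Sum>s<T. proj1 T ((s + p) mod T) G a b) = G a b"
proof -
  assume T: "0 < T"
  define s0 where "s0 = nat ((a - int p) mod int T)"
  have s0T: "s0 < T" using T unfolding s0_def by (simp add: nat_less_iff)
  have "(a mod int T = int ((s + p) mod T)) \<longleftrightarrow> s = s0" if "s < T" for s
  proof -
    have "(a mod int T = int ((s + p) mod T)) \<longleftrightarrow> ((a - int p) mod int T = int s)"
      using residue_shift_iff[OF T that, where x="a - int p" and y=0 and p=p] by simp
    also have "\<dots> \<longleftrightarrow> s = s0" unfolding s0_def using T by auto
    finally show ?thesis .
  qed
  then have "(\<Sum>s<T. proj1 T ((s + p) mod T) G a b) = (\<Sum>s<T. if s = s0 then G a b else 0)"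
    by (intro sum.cong) (auto simp: proj1_def)
  also have "\<dots> = G a b" using s0T by simp
  finally show ?thesis .
qed

lemma laurent_proj: "laurent2 A \<Longrightarrow> \<exists>N. \<forall>i j. j < N \<longrightarrow> proj1 T s A i j = 0"
  unfolding laurent2_def proj1_def by (metis (full_types))

lemma laurent_common:
  assumes "laurent2 D1" "laurent2 D2"
  shows "\<exists>N. (\<forall>i j. j < N \<longrightarrow> D1 i j = 0) \<and> (\<forall>i j. j < N \<longrightarrow> D2 i j = 0)"
proof -
  obtain N1 where "\<forall>i j. j < N1 \<longrightarrow> D1 i j = 0" using assms(1) unfolding laurent2_def by blast
  moreover obtain N2 where "\<forall>i j. j < N2 \<longrightarrow> D2 i j = 0" using assms(2) unfolding laurent2_def by blast
  ultimately show ?thesis by (intro exI[of _ "min N1 N2"]) auto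
qed

context
  fixes sc :: "complex \<Rightarrow> 'm::ab_group_add \<Rightarrow> 'm"
  assumes vs: "vector_space sc"
begin

interpretation V: vector_space sc by (rule vs)

section \<open>Finitely supported sums\<close>

lemma Sum_any_nat_bound:
  fixes f :: "nat \<Rightarrow> 'm"
  assumes "\<forall>i>K. f i = 0"
  shows "Sum_any f = (\<Sum>i\<le>K. f i)"
  by (rule Sum_any.expand_superset) (use assms in \<open>auto simp: not_le[symmetric]\<close>)

lemma Sum_any_int_bound:
  fixes f :: "int \<Rightarrow> 'm"
  assumes "\<forall>a. f a \<noteq> 0 \<longrightarrow> L \<le> a \<and> a \<le> U"
  shows "Sum_any f = (\<Sum>a\<in>{L..U}. f a)"
  by (rule Sum_any.expand_superset) (use assms in auto)

lemma Sum_any_nat_to_int: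
  fixes f :: "int \<Rightarrow> 'm"
  assumes "\<forall>u<0. f u = 0"
  shows "Sum_any f = Sum_any (\<lambda>u::nat. f (int u))"
  by (rule Sum_any_reindex) (use assms in \<open>auto simp: inj_on_def image_iff intro!: exI[of _ "nat _"]\<close>)

lemma Sum_any_nat_to_int_reflected:
  fixes f :: "int \<Rightarrow> 'm"
  assumes "\<forall>u>N. f u = 0"
  shows "Sum_any f = Sum_any (\<lambda>u::nat. f (N - int u))"
proof (rule Sum_any_reindex)
  show "inj (\<lambda>u::nat. N - int u)" by (auto simp: inj_on_def)
  show "\<forall>x. f x \<noteq> 0 \<longrightarrow> x \<in> range (\<lambda>u::nat. N - int u)"
  proof (intro allI impI)
    fix x assume "f x \<noteq> 0"
    then have "x \<le> N" using assms by (meson not_le)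
    then have "x = N - int (nat (N - x))" by simp
    then show "x \<in> range (\<lambda>u::nat. N - int u)" by blast
  qed
qed

lemma Sum_any_scale_diff:
  assumes "finite S" "\<forall>u. g u \<noteq> 0 \<longrightarrow> u \<in> S"
  shows "Sum_any (\<lambda>u. sc (w1 u) (g u)) - Sum_any (\<lambda>u. sc (w2 u) (g u))
       = Sum_any (\<lambda>u. sc (w1 u - w2 u) (g u))"
proof -
  have e: "Sum_any (\<lambda>u. sc (w u) (g u)) = (\<Sum>u\<in>S. sc (w u) (g u))" for w
    by (rule Sum_any.expand_superset) (use assms in auto)
  show ?thesis unfolding e by (simp add: sum_subtractf V.scale_left_diff_distrib)
qed

text \<open>Cauchy product of two scalar power series acting on a vector-valued sequence that
  vanishes eventually: the composition of two "diagonal" operators is diagonal with the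
  convolved coefficients.\<close>

lemma finite_sum_conv:
  fixes H :: "nat \<Rightarrow> 'm"
  assumes H: "\<forall>u>K. H u = 0"
  shows "(\<Sum>i\<le>K. sc (c i) (\<Sum>j\<le>K. sc (d j) (H (i+j))))
       = (\<Sum>u\<le>K. sc (\<Sum>i\<le>u. c i * d (u - i)) (H u))"
proof -
  have "(\<Sum>i\<le>K. sc (c i) (\<Sum>j\<le>K. sc (d j) (H (i+j))))
      = (\<Sum>(i,j)\<in>{..K}\<times>{..K}. sc (c i * d j) (H (i+j)))"
    by (simp add: V.scale_sum_right sum.cartesian_product)
  also have "\<dots> = (\<Sum>(i,j)\<in>{(i,j). i+j \<le> K}. sc (c i * d j) (H (i+j)))"
    by (rule sum.mono_neutral_right) (use H in \<open>auto simp flip: not_less\<close>)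
  also have "\<dots> = (\<Sum>u\<le>K. \<Sum>i\<le>u. sc (c i * d (u - i)) (H (i + (u - i))))"
    by (rule sum.triangle_reindex_eq)
  also have "\<dots> = (\<Sum>u\<le>K. sc (\<Sum>i\<le>u. c i * d (u - i)) (H u))"
    by (simp add: V.scale_sum_left)
  finally show ?thesis .
qed

lemma Sum_any_conv:
  fixes Z :: "nat \<Rightarrow> 'm"
  assumes Z: "\<forall>u>K. Z u = 0"
  shows "Sum_any (\<lambda>i. sc (c i) (Sum_any (\<lambda>j. sc (d j) (Z (i+j)))))
       = Sum_any (\<lambda>u. sc (\<Sum>i\<le>u. c i * d (u - i)) (Z u))"
proof -
  have inner: "Sum_any (\<lambda>j. sc (d j) (Z (i+j))) = (\<Sum>j\<le>K. sc (d j) (Z (i+j)))" for i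
    by (rule Sum_any_nat_bound) (use Z in auto)
  have "Sum_any (\<lambda>i. sc (c i) (Sum_any (\<lambda>j. sc (d j) (Z (i+j)))))
      = (\<Sum>i\<le>K. sc (c i) (\<Sum>j\<le>K. sc (d j) (Z (i+j))))"
    unfolding inner by (rule Sum_any_nat_bound) (use Z in auto)
  also have "\<dots> = (\<Sum>u\<le>K. sc (\<Sum>i\<le>u. c i * d (u - i)) (Z u))"
    by (rule finite_sum_conv[OF Z])
  also have "\<dots> = Sum_any (\<lambda>u. sc (\<Sum>i\<le>u. c i * d (u - i)) (Z u))"
    by (rule Sum_any_nat_bound[symmetric]) (use Z in auto)
  finally show ?thesis .
qed

lemma Sum_any_conv_unit:
  fixes Z :: "nat \<Rightarrow> 'm"
  assumes Z: "\<forall>u>K. Z u = 0"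
    and cd: "\<And>u. (\<Sum>i\<le>u. c i * d (u - i)) = (if u = 0 then 1 else 0)"
  shows "Sum_any (\<lambda>i. sc (c i) (Sum_any (\<lambda>j. sc (d j) (Z (i+j))))) = Z 0"
proof -
  have "Sum_any (\<lambda>i. sc (c i) (Sum_any (\<lambda>j. sc (d j) (Z (i+j)))))
      = Sum_any (\<lambda>u. sc (if u = 0 then 1 else 0) (Z u))"
    by (rule trans[OF Sum_any_conv[OF Z]]) (simp only: cd)
  also have "\<dots> = Z 0"
    by (simp add: if_distrib[of "\<lambda>c. sc c _"] cong: if_cong)
  finally show ?thesis .
qed

section \<open>Diagonal normal forms of the three delta-function terms\<close>

lemma deltaA_iota12:
  assumes G: "psupp G" and T: "T > 0"
  shows "deltaA sc T (iota12 sc T G p r k) m \<alpha> \<beta>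
    = Sum_any (\<lambda>u::int. sc (w12 (-m-1-int k) u)
        (G (\<alpha> + int p + int T*(int k + m + 1) + int T*u) (\<beta> + int r - int T*u)))"
proof -
  define Z where "Z u = G (\<alpha> + int p + int T*(int k + m + 1) + int T*int u) (\<beta> + int r - int T*int u)"
    for u :: nat
  have ZK: "\<forall>u > nat (\<beta> + int r). Z u = 0"
    unfolding Z_def by (rule psupp_diag_vanish[OF G T])
  have "deltaA sc T (iota12 sc T G p r k) m \<alpha> \<beta>
      = Sum_any (\<lambda>i. sc ((-1)^i * (of_int (-m-1) gchoose i))
          (Sum_any (\<lambda>j. sc ((-1)^j * ((- of_nat k) gchoose j)) (Z (i+j)))))"
    unfolding deltaA_def iota12_def Let_def Z_def by (simp add: algebra_simps)
  also have "\<dots> = Sum_any (\<lambda>u. sc (\<Sum>i\<le>u. ((-1)^i * (of_int (-m-1) gchoose i)) *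
          ((-1)^(u-i) * ((- of_nat k) gchoose (u-i)))) (Z u))"
    by (rule Sum_any_conv[OF ZK])
  also have "\<dots> = Sum_any (\<lambda>u. sc ((-1)^u * (of_int (-m-1-int k) gchoose u)) (Z u))"
    by (simp only: conv_iota12)
  also have "\<dots> = Sum_any (\<lambda>u::int. sc (w12 (-m-1-int k) u)
        (G (\<alpha> + int p + int T*(int k + m + 1) + int T*u) (\<beta> + int r - int T*u)))"
    by (subst Sum_any_nat_to_int) (simp_all add: w12_def Z_def)
  finally show ?thesis .
qed

lemma deltaB_iota21:
  assumes G: "psupp G" and T: "T > 0"
  shows "deltaB sc T (iota21 sc T G p r k) m \<alpha> \<beta>
    = Sum_any (\<lambda>u::int. sc (w21 (-m-1-int k) u)
        (G (\<alpha> + int p + int T*(int k + m + 1) + int T*u) (\<beta> + int r - int T*u)))"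
proof -
  define N where "N = -m-1-int k"
  define Z where "Z u = G (\<alpha> + int p - int T*int u) (\<beta> + int r + int T*(int k + m + 1) + int T*int u)"
    for u :: nat
  have ZK: "\<forall>u > nat (\<alpha> + int p). Z u = 0"
    unfolding Z_def by (rule psupp_diag_vanish_fst[OF G T])
  have "deltaB sc T (iota21 sc T G p r k) m \<alpha> \<beta>
      = Sum_any (\<lambda>i. sc ((-1) powi ((-m-1) - int i) * (of_int (-m-1) gchoose i))
          (Sum_any (\<lambda>j. sc ((-1)^(k + j) * ((- of_nat k) gchoose j)) (Z (i+j)))))"
    unfolding deltaB_def iota21_def Let_def Z_def by (simp add: algebra_simps)
  also have "\<dots> = Sum_any (\<lambda>u. sc (\<Sum>i\<le>u. ((-1) powi ((-m-1) - int i) * (of_int (-m-1) gchoose i)) *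
          ((-1)^(k + (u-i)) * ((- of_nat k) gchoose (u-i)))) (Z u))"
    by (rule Sum_any_conv[OF ZK])
  also have "\<dots> = Sum_any (\<lambda>u. sc ((-1) powi ((-m-1) + int k + int u) * (of_int N gchoose u)) (Z u))"
    by (simp only: conv_iota21 N_def)
  also have "\<dots> = Sum_any (\<lambda>u::nat. sc (w21 N (N - int u))
        (G (\<alpha> + int p + int T*(int k + m + 1) + int T*(N - int u)) (\<beta> + int r - int T*(N - int u))))"
  proof (rule Sum_any.cong)
    fix u :: nat
    have "((-1::complex) powi ((-m-1) + int k + int u)) = (-1) powi (N - int u)"
      by (auto simp: N_def powi_minus_one even_add even_diff)
    then show "sc ((-1) powi ((-m-1) + int k + int u) * (of_int N gchoose u)) (Z u)
      = sc (w21 N (N - int u))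
        (G (\<alpha> + int p + int T*(int k + m + 1) + int T*(N - int u)) (\<beta> + int r - int T*(N - int u)))"
      by (simp add: w21_def Z_def N_def algebra_simps)
  qed
  also have "\<dots> = Sum_any (\<lambda>u::int. sc (w21 N u)
        (G (\<alpha> + int p + int T*(int k + m + 1) + int T*u) (\<beta> + int r - int T*u)))"
    by (rule Sum_any_nat_to_int_reflected[symmetric]) (simp add: w21_def)
  finally show ?thesis by (simp only: N_def)
qed

text \<open>Expansion of the series  \<Sum>_i binom(w - s/T, i) x2^{w - s/T - i} x0^i  times
  iota_{x2,x1-x2} F, read off at a fixed coefficient.\<close>

lemma expand_iota2d:
  assumes H: "psupp H" and M: "0 \<le> m + int k"
  shows "Sum_any (\<lambda>i::nat. sc ((of_int w - of_nat s / of_nat T) gchoose i)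
            (iota2d sc T H p r k (\<beta> - (int T * w - int s - int T * int i)) (m - int i)))
   = Sum_any (\<lambda>a. sc ((of_int w - of_nat s / of_nat T
            + of_int (a - int p) / of_nat T) gchoose nat (m + int k))
         (H a (\<beta> - int T * w + int s + int r + int p + int T * (m + int k) - a)))"
proof -
  define P where "P = nat (m + int k)"
  define S where "S = \<beta> - int T * w + int s + int r + int p + int T * (m + int k)"
  define c where "c i = (of_int w - of_nat s / of_nat T :: complex) gchoose i" for i
  define e where "e a j = (of_int (a - int p) / of_nat T :: complex) gchoose j" for a j
  have fin: "Sum_any (\<lambda>a. sc (f a) (H a (S - a))) = (\<Sum>a\<in>{0..S}. sc (f a) (H a (S - a)))" for f
    by (rule Sum_any_int_bound) (use psupp_nz[OF H] in \<open>fastforce\<close>)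
  have inner: "iota2d sc T H p r k (\<beta> - (int T * w - int s - int T * int i)) (m - int i)
      = (\<Sum>a\<in>{0..S}. sc (e a (P - i)) (H a (S - a)))" if "i \<le> P" for i
  proof -
    have cond: "\<not> (m - int i + int k < 0)" using that M by (simp add: P_def)
    have natd: "nat (m - int i + int k) = P - i"
      using that M by (simp add: P_def nat_diff_distrib' algebra_simps)
    have "iota2d sc T H p r k (\<beta> - (int T * w - int s - int T * int i)) (m - int i)
       = Sum_any (\<lambda>a. sc (e a (P - i)) (H a (S - a)))"
      unfolding iota2d_def if_not_P[OF cond]
      by (intro Sum_any.cong) (simp only: natd, simp add: e_def S_def algebra_simps)
    then show ?thesis by (simp add: fin)
  qed
  have outer0: "iota2d sc T H p r k (\<beta> - (int T * w - int s - int T * int i)) (m - int i) = 0"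
    if "i > P" for i
    using that M by (simp add: iota2d_def P_def)
  have "Sum_any (\<lambda>i::nat. sc ((of_int w - of_nat s / of_nat T) gchoose i)
            (iota2d sc T H p r k (\<beta> - (int T * w - int s - int T * int i)) (m - int i)))
      = (\<Sum>i\<le>P. sc (c i) (iota2d sc T H p r k (\<beta> - (int T * w - int s - int T * int i)) (m - int i)))"
    unfolding c_def by (rule Sum_any_nat_bound) (use outer0 in simp)
  also have "\<dots> = (\<Sum>i\<le>P. sc (c i) (\<Sum>a\<in>{0..S}. sc (e a (P - i)) (H a (S - a))))"
    by (rule sum.cong) (simp_all add: inner)
  also have "\<dots> = (\<Sum>a\<in>{0..S}. sc (\<Sum>i\<le>P. c i * e a (P - i)) (H a (S - a)))"
    by (simp add: V.scale_sum_right V.scale_sum_left sum.swap[of _ "{..P}"])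
  also have "\<dots> = (\<Sum>a\<in>{0..S}. sc ((of_int w - of_nat s / of_nat T
            + of_int (a - int p) / of_nat T) gchoose P) (H a (S - a)))"
    by (simp add: c_def e_def atMost_atLeast0 gbinomial_Vandermonde)
  also have "\<dots> = Sum_any (\<lambda>a. sc ((of_int w - of_nat s / of_nat T
            + of_int (a - int p) / of_nat T) gchoose P) (H a (S - a)))"
    by (simp add: fin)
  finally show ?thesis by (simp add: P_def S_def)
qed

lemma expand_iota2d_diag:
  assumes H: "psupp H" and hom: "\<forall>a b. H a b \<noteq> 0 \<longrightarrow> a mod int T = int ((s + p) mod T)"
    and T: "T > 0" and M: "0 \<le> m + int k"
  shows "Sum_any (\<lambda>i::nat. sc ((of_int w - of_nat s / of_nat T) gchoose i)
            (iota2d sc T H p r k (\<beta> - (int T * w - int s - int T * int i)) (m - int i)))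
   = Sum_any (\<lambda>u::int. sc (of_int (m + int k + u) gchoose nat (m + int k))
         (H (int s + int p + int T * (m + int k - w) + int T * u) (\<beta> + int r - int T * u)))"
proof -
  define a0 where "a0 = int s + int p + int T * (m + int k - w)"
  define S where "S = \<beta> - int T * w + int s + int r + int p + int T * (m + int k)"
  define coef where "coef a = (of_int w - of_nat s / of_nat T
            + of_int (a - int p) / of_nat T :: complex) gchoose nat (m + int k)" for a
  have a0m: "a0 mod int T = int ((s + p) mod T)"
    unfolding a0_def by (simp only: mod_mult_self2 of_nat_mod of_nat_add)
  have "Sum_any (\<lambda>i::nat. sc ((of_int w - of_nat s / of_nat T) gchoose i)
            (iota2d sc T H p r k (\<beta> - (int T * w - int s - int T * int i)) (m - int i)))
      = Sum_any (\<lambda>a. sc (coef a) (H a (S - a)))"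
    unfolding expand_iota2d[OF H M] coef_def S_def ..
  also have "\<dots> = Sum_any (\<lambda>u. sc (coef (a0 + int T * u)) (H (a0 + int T * u) (S - (a0 + int T * u))))"
    by (rule Sum_any_residue_class[OF T, where f="\<lambda>a v. sc (coef a) v"]) (use hom a0m in auto)
  also have "\<dots> = Sum_any (\<lambda>u::int. sc (of_int (m + int k + u) gchoose nat (m + int k))
         (H (a0 + int T * u) (\<beta> + int r - int T * u)))"
  proof (rule Sum_any.cong)
    fix u
    have e: "(of_int ((a0 + int T * u) - int p) :: complex)
        = of_nat s + of_nat T * of_int (m + int k - w + u)"
      unfolding a0_def by (simp add: algebra_simps)
    have "(of_int w - of_nat s / of_nat T + of_int ((a0 + int T * u) - int p) / of_nat T :: complex)
        = of_int (m + int k + u)"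
      unfolding e using T by (simp add: field_simps)
    then have c: "coef (a0 + int T * u) = of_int (m + int k + u) gchoose nat (m + int k)"
      unfolding coef_def by simp
    have d: "S - (a0 + int T * u) = \<beta> + int r - int T * u"
      unfolding S_def a0_def by (simp add: algebra_simps)
    show "sc (coef (a0 + int T * u)) (H (a0 + int T * u) (S - (a0 + int T * u)))
        = sc (of_int (m + int k + u) gchoose nat (m + int k)) (H (a0 + int T * u) (\<beta> + int r - int T * u))"
      by (simp only: c d)
  qed
  finally show ?thesis by (simp only: a0_def)
qed

lemma deltaC_iota2d:
  assumes H: "psupp H" and hom: "\<forall>a b. H a b \<noteq> 0 \<longrightarrow> a mod int T = int ((s + p) mod T)"
    and T: "T > 0"
  shows "deltaC sc T s (iota2d sc T H p r k) m \<alpha> \<beta>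
    = (if (\<alpha> - int s) mod int T \<noteq> 0 then 0 else Sum_any (\<lambda>u::int. sc (wC (-m-1-int k) u)
        (H (\<alpha> + int p + int T*(int k + m + 1) + int T*u) (\<beta> + int r - int T*u))))"
proof (cases "(\<alpha> - int s) mod int T = 0")
  case False
  then show ?thesis by (simp add: deltaC_def)
next
  case z: True
  define d where "d = (\<alpha> - int s) div int T"
  have \<alpha>: "\<alpha> = int s + int T * d"
    using z unfolding d_def by (metis add.commute diff_add_cancel div_mult_mod_eq mult.commute add_0)
  have lhs: "deltaC sc T s (iota2d sc T H p r k) m \<alpha> \<beta>
     = Sum_any (\<lambda>i::nat. sc ((of_int (-d-1) - of_nat s / of_nat T) gchoose i)
            (iota2d sc T H p r k (\<beta> - (int T * (-d-1) - int s - int T * int i)) (m - int i)))"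
    using z by (simp add: deltaC_def d_def)
  show ?thesis
  proof (cases "0 \<le> m + int k")
    case False
    then show ?thesis using z unfolding lhs by (simp add: iota2d_def wC_def)
  next
    case True
    have a0: "int s + int p + int T * (m + int k - (-d-1)) = \<alpha> + int p + int T*(int k + m + 1)"
      unfolding \<alpha> by (simp add: algebra_simps)
    have w: "wC (-m-1-int k) u = of_int (m + int k + u) gchoose nat (m + int k)" for u
      using True by (simp add: wC_def algebra_simps)
    show ?thesis using z unfolding lhs expand_iota2d_diag[OF H hom T True] a0 w by simp
  qed
qed

lemma off_class_vanish:
  assumes hom: "\<forall>a b. H a b \<noteq> 0 \<longrightarrow> a mod int T = int ((s + p) mod T)"
    and off: "(\<alpha> - int s) mod int T \<noteq> 0"
  shows "H (\<alpha> + int p + int T * x) b = 0"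
proof (rule ccontr)
  assume "H (\<alpha> + int p + int T * x) b \<noteq> 0"
  then have "(\<alpha> + int p + int T * x) mod int T = int ((s + p) mod T)"
    using hom by blast
  then have "(\<alpha> + int p) mod int T = (int s + int p) mod int T"
    by (simp add: of_nat_mod mod_mult_self2 add.assoc[symmetric])
  then have "int T dvd \<alpha> - int s" by (simp add: mod_eq_dvd_iff)
  then show False using off by simp
qed

text \<open>The Jacobi identity (2) for a single x1-residue component of F: by the diagonal normal
  forms it is exactly the weight identity delta_weights.\<close>

lemma jacobi_homogeneous:
  assumes H: "psupp H" and hom: "\<forall>a b. H a b \<noteq> 0 \<longrightarrow> a mod int T = int ((s + p) mod T)"
    and T: "T > 0"
  shows "deltaA sc T (iota12 sc T H p r k) m \<alpha> \<beta> - deltaB sc T (iota21 sc T H p r k) m \<alpha> \<beta>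
       = deltaC sc T s (iota2d sc T H p r k) m \<alpha> \<beta>"
proof -
  define a0 where "a0 = \<alpha> + int p + int T*(int k + m + 1)"
  define b0 where "b0 = \<beta> + int r"
  have e12: "deltaA sc T (iota12 sc T H p r k) m \<alpha> \<beta>
     = Sum_any (\<lambda>u. sc (w12 (-m-1-int k) u) (H (a0 + int T*u) (b0 - int T*u)))"
    unfolding deltaA_iota12[OF H T] a0_def b0_def ..
  have e21: "deltaB sc T (iota21 sc T H p r k) m \<alpha> \<beta>
     = Sum_any (\<lambda>u. sc (w21 (-m-1-int k) u) (H (a0 + int T*u) (b0 - int T*u)))"
    unfolding deltaB_iota21[OF H T] a0_def b0_def ..
  have ec: "deltaC sc T s (iota2d sc T H p r k) m \<alpha> \<beta>
     = (if (\<alpha> - int s) mod int T \<noteq> 0 then 0 else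
        Sum_any (\<lambda>u. sc (wC (-m-1-int k) u) (H (a0 + int T*u) (b0 - int T*u))))"
    unfolding deltaC_iota2d[OF H hom T] a0_def b0_def ..
  show ?thesis
  proof (cases "(\<alpha> - int s) mod int T = 0")
    case False
    have "H (a0 + int T * u) b = 0" for u b
      unfolding a0_def using off_class_vanish[OF hom False, of "int k + m + 1 + u"]
      by (simp add: algebra_simps)
    then show ?thesis using False by (simp add: e12 e21 ec)
  next
    case True
    have "deltaA sc T (iota12 sc T H p r k) m \<alpha> \<beta> - deltaB sc T (iota21 sc T H p r k) m \<alpha> \<beta>
       = Sum_any (\<lambda>u. sc (w12 (-m-1-int k) u - w21 (-m-1-int k) u) (H (a0 + int T*u) (b0 - int T*u)))"
      unfolding e12 e21 by (rule Sum_any_scale_diff[OF _ diag_finite[OF H T]]) simp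
    then show ?thesis unfolding ec using True by (simp add: delta_weights)
  qed
qed

section \<open>Multiplication by x1^{p/T} x2^{r/T} (x1-x2)^k and locality\<close>

lemma polymul_Sum_any:
  "polymul sc T X p r k a b = Sum_any (\<lambda>i. sc ((-1)^i * of_nat (k choose i))
      (X (a - int p - int T * (int k - int i)) (b - int r - int T * int i)))"
  unfolding polymul_def by (rule Sum_any_nat_bound[symmetric]) simp

text \<open>The same product expanded in powers of x1 instead of x2.\<close>

lemma polymul_reflected:
  "polymul sc T X p r k a b = Sum_any (\<lambda>v. sc ((-1)^k * (-1)^v * of_nat (k choose v))
      (X (a - int p - int T * int v) (b - int r - int T * (int k - int v))))"
proof -
  have "polymul sc T X p r k a b = (\<Sum>i\<le>k. sc ((-1)^(k-i) * of_nat (k choose (k-i)))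
      (X (a - int p - int T * (int k - int (k-i))) (b - int r - int T * int (k-i))))"
    unfolding polymul_def by (rule sum_reflect)
  also have "\<dots> = (\<Sum>v\<le>k. sc ((-1)^k * (-1)^v * of_nat (k choose v))
      (X (a - int p - int T * int v) (b - int r - int T * (int k - int v))))"
  proof (rule sum.cong)
    fix v assume "v \<in> {..k}"
    then have vk: "v \<le> k" by simp
    have "(-1::complex)^k = (-1)^(k-v) * (-1)^v" using vk by (simp flip: power_add)
    then have "(-1::complex)^k * (-1)^v = (-1)^(k-v) * ((-1)^v * (-1)^v)" by (simp add: mult.assoc)
    also have "(-1::complex)^v * (-1)^v = 1" by (simp flip: power_add)
    finally have sgn: "(-1::complex)^(k-v) = (-1)^k * (-1)^v" by simp
    show "sc ((-1)^(k-v) * of_nat (k choose (k-v)))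
      (X (a - int p - int T * (int k - int (k-v))) (b - int r - int T * int (k-v)))
      = sc ((-1)^k * (-1)^v * of_nat (k choose v))
      (X (a - int p - int T * int v) (b - int r - int T * (int k - int v)))"
      using vk by (simp add: sgn binomial_symmetric[symmetric] of_nat_diff)
  qed simp
  also have "\<dots> = Sum_any (\<lambda>v. sc ((-1)^k * (-1)^v * of_nat (k choose v))
      (X (a - int p - int T * int v) (b - int r - int T * (int k - int v))))"
    by (rule Sum_any_nat_bound[symmetric]) simp
  finally show ?thesis .
qed

lemma polymul_shift: "polymul sc T X p r k a b = polymul sc T X 0 0 k (a - int p) (b - int r)"
  by (simp add: polymul_def algebra_simps)

lemma polymul_comm:
  "polymul sc T (polymul sc T X p r k) p' r' k' = polymul sc T (polymul sc T X p' r' k') p r k"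
proof (intro ext)
  fix a b
  show "polymul sc T (polymul sc T X p r k) p' r' k' a b = polymul sc T (polymul sc T X p' r' k') p r k a b"
    unfolding polymul_def V.scale_sum_right V.scale_scale
    by (subst sum.swap) (simp add: algebra_simps)
qed

lemma polymul_lower_snd:
  assumes X: "\<forall>i j. j < N \<longrightarrow> X i j = 0" and b: "b < N + int r"
  shows "polymul sc T X p r k a b = 0"
proof -
  have "b - int r - int T * int i < N" for i
  proof -
    have "0 \<le> int T * int i" by simp
    then show ?thesis using b by linarith
  qed
  then show ?thesis using X by (simp add: polymul_def)
qed

lemma polymul_lower_fst:
  assumes X: "\<forall>i j. i < N \<longrightarrow> X i j = 0" and a: "a < N + int p"
  shows "polymul sc T X p r k a b = 0"
proof -
  have "a - int p - int T * (int k - int i) < N" if "i \<le> k" for i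
  proof -
    have "0 \<le> int T * (int k - int i)" using that by simp
    then show ?thesis using a by linarith
  qed
  then show ?thesis using X by (simp add: polymul_def)
qed

lemma polymul_iota12:
  assumes G: "psupp G" and T: "T > 0"
  shows "polymul sc T (iota12 sc T G p r k) p r k = G"
proof (intro ext)
  fix a b
  define Z where "Z u = G (a + int T * int u) (b - int T * int u)" for u :: nat
  have ZK: "\<forall>u > nat b. Z u = 0"
    unfolding Z_def by (rule psupp_diag_vanish[OF G T])
  have "polymul sc T (iota12 sc T G p r k) p r k a b
      = Sum_any (\<lambda>i. sc ((-1)^i * of_nat (k choose i))
          (Sum_any (\<lambda>j. sc ((-1)^j * ((- of_nat k) gchoose j)) (Z (i+j)))))"
    unfolding polymul_Sum_any iota12_def Z_def by (simp add: algebra_simps)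
  also have "\<dots> = Z 0"
    by (rule Sum_any_conv_unit[OF ZK]) (rule conv_inverse)
  finally show "polymul sc T (iota12 sc T G p r k) p r k a b = G a b" by (simp add: Z_def)
qed

lemma iota12_polymul:
  assumes X: "\<forall>i j. j < N \<longrightarrow> X i j = 0" and T: "T > 0"
  shows "iota12 sc T (polymul sc T X p r k) p r k = X"
proof (intro ext)
  fix \<alpha> \<beta>
  define Z where "Z u = X (\<alpha> + int T * int u) (\<beta> - int T * int u)" for u :: nat
  have ZK: "\<forall>u > nat (\<beta> - N). Z u = 0"
    unfolding Z_def by (rule diag_vanish[OF X T])
  have "iota12 sc T (polymul sc T X p r k) p r k \<alpha> \<beta>
      = Sum_any (\<lambda>i. sc ((-1)^i * ((- of_nat k) gchoose i))
          (Sum_any (\<lambda>j. sc ((-1)^j * of_nat (k choose j)) (Z (i+j)))))"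
    unfolding iota12_def polymul_Sum_any Z_def by (simp add: algebra_simps)
  also have "\<dots> = Z 0"
    by (rule Sum_any_conv_unit[OF ZK]) (rule conv_inverse')
  finally show "iota12 sc T (polymul sc T X p r k) p r k \<alpha> \<beta> = X \<alpha> \<beta>" by (simp add: Z_def)
qed

lemma iota21_polymul:
  assumes X: "\<forall>i j. i < N \<longrightarrow> X i j = 0" and T: "T > 0"
  shows "iota21 sc T (polymul sc T X p r k) p r k = X"
proof (intro ext)
  fix \<alpha> \<beta>
  define Z where "Z u = X (\<alpha> - int T * int u) (\<beta> + int T * int u)" for u :: nat
  have ZK: "\<forall>u > nat (\<alpha> - N). Z u = 0"
    unfolding Z_def by (rule diag_vanish_fst[OF X T])
  have "iota21 sc T (polymul sc T X p r k) p r k \<alpha> \<beta>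
      = Sum_any (\<lambda>i. sc ((-1)^(k+i) * ((- of_nat k) gchoose i))
          (Sum_any (\<lambda>j. sc ((-1)^k * (-1)^j * of_nat (k choose j)) (Z (i+j)))))"
    unfolding iota21_def polymul_reflected Z_def by (simp add: algebra_simps)
  also have "\<dots> = Z 0"
    by (rule Sum_any_conv_unit[OF ZK]) (rule conv_inverse_signed)
  finally show "iota21 sc T (polymul sc T X p r k) p r k \<alpha> \<beta> = X \<alpha> \<beta>" by (simp add: Z_def)
qed

text \<open>Locality implies (1):  G = x1^{p/T} x2^{r/T} (x1-x2)^l A  is a power series for large
  p, r, and its two expansions are A and B.\<close>

lemma locality_gives_F:
  assumes T: "T > 0" and lA: "laurent2 A" and lB: "laurent2 (\<lambda>b a. B a b)"
    and loc: "polymul sc T A 0 0 l = polymul sc T B 0 0 l"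
  shows "\<exists>G p r. psupp G \<and> iota12 sc T G p r l = A \<and> iota21 sc T G p r l = B"
proof -
  obtain NA where NA: "\<forall>i j. j < NA \<longrightarrow> A i j = 0" using lA unfolding laurent2_def by blast
  obtain NB where NB: "\<forall>i j. i < NB \<longrightarrow> B i j = 0" using lB unfolding laurent2_def by blast
  define p where "p = nat (- NB)"
  define r where "r = nat (- NA)"
  have AB: "polymul sc T A p r l = polymul sc T B p r l"
    by (intro ext) (simp only: polymul_shift[of _ _ p r] loc)
  have "psupp (polymul sc T A p r l)"
    unfolding psupp_def
  proof (intro allI impI)
    fix a b :: int assume "a < 0 \<or> b < 0"
    then show "polymul sc T A p r l a b = 0"
    proof
      assume "a < 0"
      then have "a < NB + int p" by (simp add: p_def)
      then show ?thesis unfolding AB by (rule polymul_lower_fst[OF NB])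
    next
      assume "b < 0"
      then have "b < NA + int r" by (simp add: r_def)
      then show ?thesis by (rule polymul_lower_snd[OF NA])
    qed
  qed
  moreover have "iota12 sc T (polymul sc T A p r l) p r l = A" by (rule iota12_polymul[OF NA T])
  moreover have "iota21 sc T (polymul sc T A p r l) p r l = B"
    unfolding AB by (rule iota21_polymul[OF NB T])
  ultimately show ?thesis by blast
qed

text \<open>The x0^{-l-1}-coefficients of the two delta-terms are the two sides of locality.\<close>

lemma deltaA_polymul:
  "deltaA sc T X (- int l - 1) \<alpha> \<beta> = polymul sc T X 0 0 l \<alpha> \<beta>"
proof -
  have "deltaA sc T X (- int l - 1) \<alpha> \<beta> = Sum_any (\<lambda>i. sc ((-1)^i * of_nat (l choose i))
           (X (\<alpha> - int T * (int l - int i)) (\<beta> - int T * int i)))"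
    unfolding deltaA_def Let_def by (simp add: binomial_gbinomial)
  then show ?thesis by (simp add: polymul_Sum_any)
qed

lemma deltaB_polymul:
  "deltaB sc T Y (- int l - 1) \<alpha> \<beta> = polymul sc T Y 0 0 l \<alpha> \<beta>"
proof -
  have "deltaB sc T Y (- int l - 1) \<alpha> \<beta> = Sum_any (\<lambda>i. sc ((-1) powi (int l - int i) * of_nat (l choose i))
           (Y (\<alpha> - int T * int i) (\<beta> - int T * (int l - int i))))"
    unfolding deltaB_def Let_def by (simp add: binomial_gbinomial)
  also have "\<dots> = Sum_any (\<lambda>i. sc ((-1)^l * (-1)^i * of_nat (l choose i))
           (Y (\<alpha> - int T * int i) (\<beta> - int T * (int l - int i))))"
  proof (rule Sum_any.cong)
    fix i
    have "(-1::complex) powi (int l - int i) = (-1)^l * (-1)^i"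
      by (auto simp: powi_minus_one power_minus_one even_add even_diff)
    then show "sc ((-1) powi (int l - int i) * of_nat (l choose i)) (Y (\<alpha> - int T * int i) (\<beta> - int T * (int l - int i)))
      = sc ((-1)^l * (-1)^i * of_nat (l choose i)) (Y (\<alpha> - int T * int i) (\<beta> - int T * (int l - int i)))"
      by simp
  qed
  finally show ?thesis by (simp add: polymul_reflected)
qed

lemma polymul_proj:
  "polymul sc T (proj1 T s X) 0 0 l = proj1 T s (polymul sc T X 0 0 l)"
proof (intro ext)
  fix a b
  have "((a - int T * (int l - int i)) mod int T = int s) = (a mod int T = int s)" for i
  proof -
    have "a - int T * (int l - int i) = a + int T * (int i - int l)" by (simp add: algebra_simps)
    then show ?thesis by (simp only: mod_mult_self2)
  qed
  then show "polymul sc T (proj1 T s X) 0 0 l a b = proj1 T s (polymul sc T X 0 0 l) a b"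
    unfolding polymul_def proj1_def by simp
qed

text \<open>(1) implies locality: for l \<ge> k the x0^{-l-1}-coefficient of the Jacobi identity of F
  has vanishing right-hand weight.\<close>

lemma locality_of_F:
  assumes G: "psupp G" and T: "T > 0" and kl: "k \<le> l"
  shows "polymul sc T (iota12 sc T G p r k) 0 0 l = polymul sc T (iota21 sc T G p r k) 0 0 l"
proof (intro ext)
  fix a b
  have w: "w12 (- (- int l - 1) - 1 - int k) u = w21 (- (- int l - 1) - 1 - int k) u" for u
    using delta_weights[of "- (- int l - 1) - 1 - int k" u] kl by (simp add: wC_def)
  show "polymul sc T (iota12 sc T G p r k) 0 0 l a b = polymul sc T (iota21 sc T G p r k) 0 0 l a b"
    unfolding deltaA_polymul[where X="iota12 sc T G p r k", symmetric]
      deltaB_polymul[where Y="iota21 sc T G p r k", symmetric] deltaA_iota12[OF G T] deltaB_iota21[OF G T] w ..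
qed

section \<open>The substitution x1 = x0 + x2: condition (3) for F\<close>

lemma substA_iota12:
  assumes H: "psupp H" and T: "T > 0"
  shows "substA sc T s q (iota12 sc T H p r k) m \<gamma>
      = Sum_any (\<lambda>u::int. sc (if 0 \<le> u then (of_int (m + int k + u) :: complex) gchoose nat u else 0)
           (H (int s + int p + int T * (m + int k - int q) + int T * u) (\<gamma> + int r - int T * u)))"
proof -
  define Z where "Z u = H (int s + int p + int T * (m + int k - int q) + int T * int u)
      (\<gamma> + int r - int T * int u)" for u :: nat
  have ZK: "\<forall>u > nat (\<gamma> + int r). Z u = 0"
    unfolding Z_def by (rule psupp_diag_vanish[OF H T])
  have "substA sc T s q (iota12 sc T H p r k) m \<gamma>
      = Sum_any (\<lambda>j. sc (of_int (m + int j) gchoose j)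
          (Sum_any (\<lambda>i. sc ((-1)^i * ((- of_nat k) gchoose i)) (Z (j+i)))))"
    unfolding substA_def iota12_def Z_def by (simp add: algebra_simps)
  also have "\<dots> = Sum_any (\<lambda>u. sc (\<Sum>j\<le>u. (of_int (m + int j) gchoose j) *
        ((-1)^(u-j) * ((- of_nat k) gchoose (u-j)))) (Z u))"
    by (rule Sum_any_conv[OF ZK])
  also have "\<dots> = Sum_any (\<lambda>u. sc (of_int (m + int k + int u) gchoose u) (Z u))"
    by (simp only: conv_substitution)
  also have "\<dots> = Sum_any (\<lambda>u::int. sc (if 0 \<le> u then (of_int (m + int k + u) :: complex) gchoose nat u else 0)
           (H (int s + int p + int T * (m + int k - int q) + int T * u) (\<gamma> + int r - int T * u)))"
    by (subst Sum_any_nat_to_int) (simp_all add: Z_def)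
  finally show ?thesis .
qed

lemma subst_support_pos:
  assumes T: "T > 0" and s: "s < T" and q: "p + 1 \<le> q"
    and nn: "0 \<le> int s + int p + int T * (M - int q) + int T * u"
  shows "0 < M + u"
proof -
  have "int T * (int p + 1) \<le> int T * int q" using q by (simp add: mult_left_mono)
  moreover have "1 * int p \<le> int T * int p" using T by (intro mult_right_mono) auto
  ultimately have "0 < int T * (M + u)" using nn s by (simp add: algebra_simps)
  then show ?thesis using T by (simp add: zero_less_mult_iff)
qed

text \<open>Condition (3) for a single x1-residue component of F, for every q > p: both sides are
  diagonal, and their weights agree by binomial symmetry on the support of H.\<close>

lemma substA_iota12_expC:
  assumes H: "psupp H" and hom: "\<forall>a b. H a b \<noteq> 0 \<longrightarrow> a mod int T = int ((s + p) mod T)"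
    and T: "T > 0" and s: "s < T" and q: "p + 1 \<le> q"
  shows "substA sc T s q (iota12 sc T H p r k) = expC sc T s q (iota2d sc T H p r k)"
proof (intro ext)
  fix m \<gamma>
  define M where "M = m + int k"
  define a0 where "a0 = int s + int p + int T * (M - int q)"
  have rhs: "expC sc T s q (iota2d sc T H p r k) m \<gamma>
      = Sum_any (\<lambda>u::int. sc (if M < 0 then 0 else (of_int (M + u) :: complex) gchoose nat M)
           (H (a0 + int T * u) (\<gamma> + int r - int T * u)))"
  proof (cases "0 \<le> M")
    case True
    show ?thesis
      using expand_iota2d_diag[OF H hom T True[unfolded M_def], where w="int q" and \<beta>=\<gamma>] True
      by (simp add: expC_def a0_def M_def)
  next
    case False
    then show ?thesis by (simp add: expC_def iota2d_def M_def)
  qed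
  have lhs: "substA sc T s q (iota12 sc T H p r k) m \<gamma>
      = Sum_any (\<lambda>u::int. sc (if 0 \<le> u then (of_int (M + u) :: complex) gchoose nat u else 0)
           (H (a0 + int T * u) (\<gamma> + int r - int T * u)))"
    unfolding substA_iota12[OF H T] a0_def M_def ..
  have weights: "sc (if 0 \<le> u then (of_int (M + u) :: complex) gchoose nat u else 0) (H (a0 + int T * u) (\<gamma> + int r - int T * u))
      = sc (if M < 0 then 0 else (of_int (M + u) :: complex) gchoose nat M) (H (a0 + int T * u) (\<gamma> + int r - int T * u))"
    for u
  proof (cases "H (a0 + int T * u) (\<gamma> + int r - int T * u) = 0")
    case False
    then have "0 \<le> a0 + int T * u" using psupp_nz[OF H] by blast
    then have "0 < M + u" unfolding a0_def using subst_support_pos[OF T s q] by blast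
    then show ?thesis by (simp only: gchoose_int_symmetric)
  qed simp
  show "substA sc T s q (iota12 sc T H p r k) m \<gamma> = expC sc T s q (iota2d sc T H p r k) m \<gamma>"
    unfolding lhs rhs by (rule Sum_any.cong) (rule weights)
qed

section \<open>Injectivity of C \<mapsto> deltaC and C \<mapsto> expC\<close>

text \<open>Pascal's rule  binom(c+1, j) = binom(c, j) + binom(c, j-1)  on the level of the
  coefficient series.\<close>

lemma Sum_any_pascal_split:
  fixes W :: "nat \<Rightarrow> 'm"
  assumes W: "\<forall>j>K. W j = 0"
    and c: "\<forall>j. cL j = c1 j + (case j of 0 \<Rightarrow> 0 | Suc j' \<Rightarrow> c2 j')"
  shows "Sum_any (\<lambda>j. sc (cL j) (W j)) = Sum_any (\<lambda>j. sc (c1 j) (W j)) + Sum_any (\<lambda>j. sc (c2 j) (W (Suc j)))"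
proof -
  define g where "g j = sc (case j of 0 \<Rightarrow> 0 | Suc j' \<Rightarrow> c2 j') (W j)" for j
  have e1: "Sum_any (\<lambda>j. sc (cL j) (W j)) = (\<Sum>j\<le>Suc K. sc (cL j) (W j))"
    by (rule Sum_any_nat_bound) (use W in simp)
  have e2: "Sum_any (\<lambda>j. sc (c1 j) (W j)) = (\<Sum>j\<le>Suc K. sc (c1 j) (W j))"
    by (rule Sum_any_nat_bound) (use W in simp)
  have e3: "Sum_any (\<lambda>j. sc (c2 j) (W (Suc j))) = (\<Sum>j\<le>K. sc (c2 j) (W (Suc j)))"
    by (rule Sum_any_nat_bound) (use W in simp)
  have "(\<Sum>j\<le>Suc K. sc (cL j) (W j)) = (\<Sum>j\<le>Suc K. sc (c1 j) (W j)) + (\<Sum>j\<le>Suc K. g j)"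
    unfolding g_def using c by (simp add: V.scale_left_distrib sum.distrib)
  also have "(\<Sum>j\<le>Suc K. g j) = g 0 + (\<Sum>j\<le>K. g (Suc j))"
    by (rule sum.atMost_Suc_shift)
  also have "\<dots> = (\<Sum>j\<le>K. sc (c2 j) (W (Suc j)))" by (simp add: g_def)
  finally show ?thesis using e1 e2 e3 by simp
qed

text \<open>Raising q by one multiplies both sides of (3) by (x0 + x2); the two recursions agree.\<close>

lemma substA_Suc:
  assumes lX: "\<forall>i j. j < N \<longrightarrow> X i j = 0" and T: "T > 0"
  shows "substA sc T s (Suc q) X m \<gamma> = substA sc T s q X (m - 1) \<gamma> + substA sc T s q X m (\<gamma> - int T)"
proof -
  define W where "W j = X (int T * (m + int j - int (Suc q)) + int s) (\<gamma> - int T * int j)" for j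
  have WK: "\<forall>j>nat (\<gamma> - N). W j = 0"
    unfolding W_def by (rule diag_vanish[OF lX T])
  have c: "\<forall>j. (of_int (m + int j) gchoose j :: complex) = (of_int (m - 1 + int j) gchoose j)
      + (case j of 0 \<Rightarrow> 0 | Suc j' \<Rightarrow> of_int (m + int j') gchoose j')"
  proof
    fix j show "(of_int (m + int j) gchoose j :: complex) = (of_int (m - 1 + int j) gchoose j)
      + (case j of 0 \<Rightarrow> 0 | Suc j' \<Rightarrow> of_int (m + int j') gchoose j')"
    proof (cases j)
      case (Suc j')
      have "(of_int (m + int j) gchoose j :: complex) = (of_int (m + int j') + 1) gchoose Suc j'"
        by (simp add: Suc algebra_simps)
      also have "\<dots> = (of_int (m + int j') gchoose j') + (of_int (m + int j') gchoose Suc j')"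
        by (rule gbinomial_Suc_Suc)
      also have "(of_int (m + int j') gchoose Suc j') = (of_int (m - 1 + int j) gchoose j :: complex)"
        by (simp add: Suc algebra_simps)
      finally show ?thesis using Suc by simp
    qed simp
  qed
  have "substA sc T s (Suc q) X m \<gamma> = Sum_any (\<lambda>j. sc (of_int (m + int j) gchoose j) (W j))"
    unfolding substA_def W_def ..
  also have "\<dots> = Sum_any (\<lambda>j. sc (of_int (m - 1 + int j) gchoose j) (W j))
        + Sum_any (\<lambda>j. sc (of_int (m + int j) gchoose j) (W (Suc j)))"
    by (rule Sum_any_pascal_split[OF WK c])
  also have "Sum_any (\<lambda>j. sc (of_int (m - 1 + int j) gchoose j) (W j)) = substA sc T s q X (m - 1) \<gamma>"
    unfolding substA_def W_def by (intro Sum_any.cong) (simp add: algebra_simps)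
  also have "Sum_any (\<lambda>j. sc (of_int (m + int j) gchoose j) (W (Suc j))) = substA sc T s q X m (\<gamma> - int T)"
    unfolding substA_def W_def by (intro Sum_any.cong) (simp add: algebra_simps)
  finally show ?thesis .
qed

lemma expC_Suc:
  assumes lC: "\<forall>i j. j < N \<longrightarrow> C i j = 0"
  shows "expC sc T s (Suc q) C m \<gamma> = expC sc T s q C m (\<gamma> - int T) + expC sc T s q C (m - 1) \<gamma>"
proof -
  define W where "W j = C (\<gamma> - (int T * int (Suc q) - int s - int T * int j)) (m - int j)" for j
  have WK: "\<forall>j>nat (m - N). W j = 0"
    unfolding W_def using lC by (simp add: nat_less_iff)
  define c where "c = (of_nat q - of_nat s / of_nat T :: complex)"
  have c: "\<forall>j. ((of_nat (Suc q) - of_nat s / of_nat T) gchoose j :: complex) = (c gchoose j)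
      + (case j of 0 \<Rightarrow> 0 | Suc j' \<Rightarrow> c gchoose j')"
  proof
    fix j show "((of_nat (Suc q) - of_nat s / of_nat T) gchoose j :: complex) = (c gchoose j)
      + (case j of 0 \<Rightarrow> 0 | Suc j' \<Rightarrow> c gchoose j')"
    proof (cases j)
      case (Suc j')
      have e: "(of_nat (Suc q) - of_nat s / of_nat T :: complex) = c + 1" by (simp add: c_def)
      have "((of_nat (Suc q) - of_nat s / of_nat T) gchoose j :: complex) = (c gchoose j') + (c gchoose j)"
        unfolding e Suc by (rule gbinomial_Suc_Suc)
      then show ?thesis using Suc by simp
    qed simp
  qed
  have "expC sc T s (Suc q) C m \<gamma> = Sum_any (\<lambda>j. sc ((of_nat (Suc q) - of_nat s / of_nat T) gchoose j) (W j))"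
    unfolding expC_def W_def ..
  also have "\<dots> = Sum_any (\<lambda>j. sc (c gchoose j) (W j)) + Sum_any (\<lambda>j. sc (c gchoose j) (W (Suc j)))"
    by (rule Sum_any_pascal_split[OF WK c])
  also have "Sum_any (\<lambda>j. sc (c gchoose j) (W j)) = expC sc T s q C m (\<gamma> - int T)"
    unfolding expC_def W_def c_def by (intro Sum_any.cong) (simp add: algebra_simps)
  also have "Sum_any (\<lambda>j. sc (c gchoose j) (W (Suc j))) = expC sc T s q C (m - 1) \<gamma>"
    unfolding expC_def W_def c_def by (intro Sum_any.cong) (simp add: algebra_simps)
  finally show ?thesis .
qed

lemma raise_q:
  assumes lX: "\<forall>i j. j < N1 \<longrightarrow> X i j = 0" and lC: "\<forall>i j. j < N2 \<longrightarrow> C i j = 0" and T: "T > 0"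
    and eq: "substA sc T s q X = expC sc T s q C"
  shows "substA sc T s (q + d) X = expC sc T s (q + d) C"
proof (induction d)
  case 0 then show ?case using eq by simp
next
  case (Suc d)
  show ?case
  proof (intro ext)
    fix m \<gamma>
    show "substA sc T s (q + Suc d) X m \<gamma> = expC sc T s (q + Suc d) C m \<gamma>"
      using substA_Suc[OF lX T, of s "q + d" m \<gamma>] expC_Suc[OF lC, of T s "q + d" m \<gamma>] Suc
      by (simp add: add.commute)
  qed
qed

text \<open>An operator  D \<mapsto> \<Sum>_j binom(c, j) x2^{-j} x0^j D  is unitriangular with respect to the
  x0-exponent, hence injective on Laurent series in x0.\<close>

lemma triangular_inj:
  assumes l1: "\<forall>i j. j < N \<longrightarrow> D1 i j = 0" and l2: "\<forall>i j. j < N \<longrightarrow> D2 i j = 0"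
    and eq: "\<And>\<beta> m. Sum_any (\<lambda>j::nat. sc (c gchoose j) (D1 (\<beta> + int T * int j) (m - int j)))
              = Sum_any (\<lambda>j. sc (c gchoose j) (D2 (\<beta> + int T * int j) (m - int j)))"
  shows "D1 = D2"
proof -
  have below: "\<forall>m < N + int K. \<forall>\<beta>. D1 \<beta> m = D2 \<beta> m" for K
  proof (induction K)
    case 0 then show ?case using l1 l2 by simp
  next
    case (Suc K)
    show ?case
    proof (intro allI impI)
      fix m \<beta> assume m: "m < N + int (Suc K)"
      show "D1 \<beta> m = D2 \<beta> m"
      proof (cases "m < N + int K")
        case True then show ?thesis using Suc.IH by blast
      next
        case False
        then have mK: "m = N + int K" using m by simp
        define f1 where "f1 j = sc (c gchoose j) (D1 (\<beta> + int T * int j) (m - int j))" for j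
        define f2 where "f2 j = sc (c gchoose j) (D2 (\<beta> + int T * int j) (m - int j))" for j
        have z1: "Sum_any f1 = (\<Sum>j\<le>Suc K. f1 j)"
          by (rule Sum_any_nat_bound) (use l1 mK in \<open>auto simp: f1_def\<close>)
        have z2: "Sum_any f2 = (\<Sum>j\<le>Suc K. f2 j)"
          by (rule Sum_any_nat_bound) (use l2 mK in \<open>auto simp: f2_def\<close>)
        have higher: "f1 (Suc j) = f2 (Suc j)" for j
        proof -
          have "m - int (Suc j) < N + int K" using mK by simp
          then show ?thesis using Suc.IH unfolding f1_def f2_def by simp
        qed
        have "f1 0 + (\<Sum>j\<le>K. f1 (Suc j)) = f2 0 + (\<Sum>j\<le>K. f2 (Suc j))"
          using eq[of \<beta> m] unfolding z1[unfolded f1_def] z2[unfolded f2_def] sum.atMost_Suc_shift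
          by (simp add: f1_def f2_def)
        then have "f1 0 = f2 0" using higher by simp
        then show ?thesis by (simp add: f1_def f2_def)
      qed
    qed
  qed
  show ?thesis
  proof (intro ext)
    fix \<beta> m
    have "m < N + int (nat (m - N) + 1)" by simp
    then show "D1 \<beta> m = D2 \<beta> m" using below by blast
  qed
qed

lemma deltaC_inj:
  assumes "laurent2 D1" "laurent2 D2" and T: "T > 0"
    and eq: "deltaC sc T s D1 = deltaC sc T s D2"
  shows "D1 = D2"
proof -
  obtain N where N: "\<forall>i j. j < N \<longrightarrow> D1 i j = 0" "\<forall>i j. j < N \<longrightarrow> D2 i j = 0"
    using laurent_common[OF assms(1,2)] by blast
  have form: "deltaC sc T s D m (int s - int T) (\<beta> - int s)
     = Sum_any (\<lambda>j::nat. sc ((- (of_nat s / of_nat T)) gchoose j) (D (\<beta> + int T * int j) (m - int j)))"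
    for D \<beta> m
  proof -
    have "(int s - int T - int s) div int T = -1" using T by (simp add: zdiv_zminus1_eq_if)
    moreover have "(int s - int T - int s) mod int T = 0" by simp
    ultimately show ?thesis unfolding deltaC_def Let_def by (simp add: algebra_simps)
  qed
  show ?thesis
  proof (rule triangular_inj[OF N])
    fix \<beta> m
    show "Sum_any (\<lambda>j::nat. sc ((- (of_nat s / of_nat T)) gchoose j) (D1 (\<beta> + int T * int j) (m - int j)))
        = Sum_any (\<lambda>j::nat. sc ((- (of_nat s / of_nat T)) gchoose j) (D2 (\<beta> + int T * int j) (m - int j)))"
      using form[of D1 m \<beta>] form[of D2 m \<beta>] eq by simp
  qed
qed

lemma expC_inj:
  assumes "laurent2 D1" "laurent2 D2"
    and eq: "expC sc T s q D1 = expC sc T s q D2"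
  shows "D1 = D2"
proof -
  obtain N where N: "\<forall>i j. j < N \<longrightarrow> D1 i j = 0" "\<forall>i j. j < N \<longrightarrow> D2 i j = 0"
    using laurent_common[OF assms(1,2)] by blast
  have form: "expC sc T s q D m (\<beta> + int T * int q - int s)
     = Sum_any (\<lambda>j::nat. sc ((of_nat q - of_nat s / of_nat T) gchoose j) (D (\<beta> + int T * int j) (m - int j)))"
    for D \<beta> m
    unfolding expC_def by (simp add: algebra_simps)
  show ?thesis
  proof (rule triangular_inj[OF N])
    fix \<beta> m
    show "Sum_any (\<lambda>j::nat. sc ((of_nat q - of_nat s / of_nat T) gchoose j) (D1 (\<beta> + int T * int j) (m - int j)))
        = Sum_any (\<lambda>j::nat. sc ((of_nat q - of_nat s / of_nat T) gchoose j) (D2 (\<beta> + int T * int j) (m - int j)))"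
      using form[of D1 m \<beta>] form[of D2 m \<beta>] eq by simp
  qed
qed

lemma deltaC_zero:
  assumes "\<forall>i j. j < N \<longrightarrow> D i j = 0" and "m < N"
  shows "deltaC sc T s D m \<alpha> \<beta> = 0"
  using assms by (simp add: deltaC_def Let_def)

section \<open>Residue-class components of F\<close>

lemma proj1_iota12:
  assumes T: "0 < T" and s: "s < T"
  shows "proj1 T s (iota12 sc T G p r k) = iota12 sc T (proj1 T ((s + p) mod T) G) p r k"
proof (intro ext)
  fix \<alpha> \<beta>
  have "((\<alpha> + int p + int T * (int k + int i)) mod int T = int ((s + p) mod T)) \<longleftrightarrow> (\<alpha> mod int T = int s)"
    for i
    using residue_shift_iff[OF T s] by blast
  then show "proj1 T s (iota12 sc T G p r k) \<alpha> \<beta> = iota12 sc T (proj1 T ((s + p) mod T) G) p r k \<alpha> \<beta>"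
    unfolding proj1_def iota12_def by simp
qed

lemma proj1_iota21:
  assumes T: "0 < T" and s: "s < T"
  shows "proj1 T s (iota21 sc T G p r k) = iota21 sc T (proj1 T ((s + p) mod T) G) p r k"
proof (intro ext)
  fix \<alpha> \<beta>
  have "((\<alpha> + int p - int T * int i) mod int T = int ((s + p) mod T)) \<longleftrightarrow> (\<alpha> mod int T = int s)" for i
    using residue_shift_iff[OF T s, where x=\<alpha> and y="- int i"] by simp
  then show "proj1 T s (iota21 sc T G p r k) \<alpha> \<beta> = iota21 sc T (proj1 T ((s + p) mod T) G) p r k \<alpha> \<beta>"
    unfolding proj1_def iota21_def by simp
qed

lemma laurent_iota2d:
  assumes H: "psupp H"
  shows "laurent2 (iota2d sc T H p r k)"
  unfolding laurent2_def
proof (intro conjI allI)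
  show "\<exists>N. \<forall>i j. j < N \<longrightarrow> iota2d sc T H p r k i j = 0"
    by (intro exI[of _ "- int k"]) (simp add: iota2d_def)
  fix n
  show "\<exists>N. \<forall>i. i < N \<longrightarrow> iota2d sc T H p r k i n = 0"
  proof (intro exI[of _ "- (int r + int p + int T * (n + int k))"] allI impI)
    fix i assume i: "i < - (int r + int p + int T * (n + int k))"
    have "H a (i + int r + int p + int T * (n + int k) - a) = 0" for a
      using psupp_nz[OF H, of a] i by force
    then show "iota2d sc T H p r k i n = 0" by (simp add: iota2d_def)
  qed
qed

lemma laurent_CsF: "psupp G \<Longrightarrow> laurent2 (CsF sc T G p r k s)"
  unfolding CsF_def by (intro laurent_iota2d proj_psupp)

lemma sum_CsF:
  assumes T: "0 < T" and G: "psupp G"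
  shows "(\<lambda>b n. \<Sum>s<T. CsF sc T G p r k s b n) = iota2d sc T G p r k"
proof (intro ext)
  fix b n
  show "(\<Sum>s<T. CsF sc T G p r k s b n) = iota2d sc T G p r k b n"
  proof (cases "n + int k < 0")
    case True then show ?thesis by (simp add: CsF_def iota2d_def)
  next
    case False
    define S where "S = b + int r + int p + int T * (n + int k)"
    define c where "c a = (of_int (a - int p) / of_nat T :: complex) gchoose nat (n + int k)" for a
    have e: "iota2d sc T H p r k b n = (\<Sum>a\<in>{0..S}. sc (c a) (H a (S - a)))" if "psupp H" for H
    proof -
      have "Sum_any (\<lambda>a. sc (c a) (H a (S - a))) = (\<Sum>a\<in>{0..S}. sc (c a) (H a (S - a)))"
        by (rule Sum_any_int_bound) (use psupp_nz[OF that] in fastforce)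
      then show ?thesis unfolding iota2d_def using False by (simp add: S_def c_def)
    qed
    have "(\<Sum>s<T. CsF sc T G p r k s b n)
        = (\<Sum>s<T. \<Sum>a\<in>{0..S}. sc (c a) (proj1 T ((s + p) mod T) G a (S - a)))"
      unfolding CsF_def by (simp add: e proj_psupp[OF G])
    also have "\<dots> = (\<Sum>a\<in>{0..S}. sc (c a) (\<Sum>s<T. proj1 T ((s + p) mod T) G a (S - a)))"
      by (simp add: V.scale_sum_right sum.swap[of _ "{..<T}"])
    also have "\<dots> = iota2d sc T G p r k b n"
      by (simp add: sum_proj[OF T] e[OF G])
    finally show ?thesis .
  qed
qed

lemma components_sum_to_C:
  assumes T: "0 < T" and G: "psupp G" and sumC: "(\<lambda>b n. \<Sum>s<T. Cs s b n) = C"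
    and eqs: "\<forall>s<T. Cs s = CsF sc T G p r k s"
  shows "C = iota2d sc T G p r k"
proof -
  have "C = (\<lambda>b n. \<Sum>s<T. CsF sc T G p r k s b n)"
    unfolding sumC[symmetric] using eqs by (intro ext sum.cong) auto
  then show ?thesis by (simp only: sum_CsF[OF T G])
qed

lemma jacobi_components:
  assumes G: "psupp G" and T: "0 < T" and s: "s < T"
  shows "(\<lambda>m \<alpha> \<beta>. deltaA sc T (proj1 T s (iota12 sc T G p r k)) m \<alpha> \<beta>
             - deltaB sc T (proj1 T s (iota21 sc T G p r k)) m \<alpha> \<beta>)
         = deltaC sc T s (CsF sc T G p r k s)"
  unfolding proj1_iota12[OF T s] proj1_iota21[OF T s] CsF_def
  by (intro ext jacobi_homogeneous proj_psupp[OF G] proj_hom T)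

lemma substitution_components:
  assumes G: "psupp G" and T: "0 < T" and s: "s < T"
  shows "substA sc T s (p + 1) (proj1 T s (iota12 sc T G p r k)) = expC sc T s (p + 1) (CsF sc T G p r k s)"
  unfolding proj1_iota12[OF T s] CsF_def
  by (rule substA_iota12_expC[OF proj_psupp[OF G] proj_hom T s]) simp

section \<open>The implications between (1), (2) and (3)\<close>

lemma F_imp_C2:
  assumes T: "0 < T" and F: "isF sc T A B C G p r k"
  shows "isC2 sc T A B C (CsF sc T G p r k)"
  using F sum_CsF[OF T] jacobi_components[OF _ T] laurent_CsF
  unfolding isF_def isC2_def by auto

lemma F_imp_C3:
  assumes T: "0 < T" and F: "isF sc T A B C G p r k"
  shows "isC3 sc T A B C (CsF sc T G p r k)"
proof -
  have G: "psupp G" "iota12 sc T G p r k = A" "iota21 sc T G p r k = B" "iota2d sc T G p r k = C"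
    using F unfolding isF_def by auto
  have "polymul sc T A 0 0 (Suc k) = polymul sc T B 0 0 (Suc k)"
    using locality_of_F[OF G(1) T, of k "Suc k" p r] G by simp
  moreover have "\<forall>s<T. substA sc T s (p + 1) (proj1 T s A) = expC sc T s (p + 1) (CsF sc T G p r k s)"
    using substitution_components[OF G(1) T] G(2) by blast
  ultimately show ?thesis
    using G sum_CsF[OF T G(1)] laurent_CsF[OF G(1)] unfolding isC3_def
    by (intro exI[of _ "Suc k"] exI[of _ "p + 1"]) auto
qed

lemma C2_components_unique:
  assumes T: "0 < T" and G: "psupp G" and A: "iota12 sc T G p r k = A"
    and B: "iota21 sc T G p r k = B" and C2: "isC2 sc T A B C Cs"
  shows "\<forall>s<T. Cs s = CsF sc T G p r k s"
proof (intro allI impI)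
  fix s assume s: "s < T"
  have "deltaC sc T s (Cs s) = (\<lambda>m \<alpha> \<beta>. deltaA sc T (proj1 T s A) m \<alpha> \<beta> - deltaB sc T (proj1 T s B) m \<alpha> \<beta>)"
    using C2 s unfolding isC2_def by simp
  also have "\<dots> = deltaC sc T s (CsF sc T G p r k s)"
    using jacobi_components[OF G T s, of p r k] A B by simp
  finally show "Cs s = CsF sc T G p r k s"
    using deltaC_inj C2 s laurent_CsF[OF G] T unfolding isC2_def by blast
qed

lemma C3_components_unique:
  assumes T: "0 < T" and G: "psupp G" and A: "iota12 sc T G p r k = A"
    and lA: "laurent2 A" and C3: "isC3 sc T A B C Cs"
  shows "\<forall>s<T. Cs s = CsF sc T G p r k s"
proof (intro allI impI)
  fix s assume s: "s < T"
  obtain q where lC: "laurent2 (Cs s)" and eq: "substA sc T s q (proj1 T s A) = expC sc T s q (Cs s)"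
    using C3 s unfolding isC3_def by blast
  obtain N1 where N1: "\<forall>i j. j < N1 \<longrightarrow> proj1 T s A i j = 0" using laurent_proj[OF lA] by blast
  obtain N2 where N2: "\<forall>i j. j < N2 \<longrightarrow> Cs s i j = 0" using lC unfolding laurent2_def by blast
  have "expC sc T s (q + (p + 1)) (Cs s) = substA sc T s (q + (p + 1)) (proj1 T s A)"
    using raise_q[OF N1 N2 T eq, of "p + 1"] by (rule sym)
  also have "\<dots> = expC sc T s (q + (p + 1)) (CsF sc T G p r k s)"
    unfolding A[symmetric] proj1_iota12[OF T s] CsF_def
    by (rule substA_iota12_expC[OF proj_psupp[OF G] proj_hom T s]) simp
  finally show "Cs s = CsF sc T G p r k s" by (rule expC_inj[OF lC laurent_CsF[OF G]])
qed

text \<open>(2) implies locality: the x0^{-l-1}-coefficient of (2) vanishes once -l-1 lies below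
  the x0-order of all C^[s].\<close>

lemma C2_imp_locality:
  assumes T: "0 < T" and C2: "isC2 sc T A B C Cs"
  shows "\<exists>l. polymul sc T A 0 0 l = polymul sc T B 0 0 l"
proof -
  have "\<forall>s<T. \<exists>N. \<forall>i j. j < N \<longrightarrow> Cs s i j = 0" using C2 unfolding isC2_def laurent2_def by blast
  then obtain f where f: "\<forall>s<T. \<forall>i j. j < f s \<longrightarrow> Cs s i j = 0" by metis
  define N where "N = - (\<Sum>s<T. \<bar>f s\<bar>)"
  have Nf: "N \<le> f s" if "s < T" for s
  proof -
    have "\<bar>f s\<bar> \<le> (\<Sum>s<T. \<bar>f s\<bar>)" by (rule member_le_sum) (use that in auto)
    then show ?thesis unfolding N_def by linarith
  qed
  define l where "l = nat (- N) + 1"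
  have "proj1 T s (polymul sc T A 0 0 l) = proj1 T s (polymul sc T B 0 0 l)" if s: "s < T" for s
  proof (intro ext)
    fix a b
    have "deltaA sc T (proj1 T s A) (- int l - 1) a b - deltaB sc T (proj1 T s B) (- int l - 1) a b
        = deltaC sc T s (Cs s) (- int l - 1) a b"
      using C2 s unfolding isC2_def by (metis (no_types, lifting))
    also have "\<dots> = 0"
    proof (rule deltaC_zero)
      show "\<forall>i j. j < N \<longrightarrow> Cs s i j = 0" using f Nf s by fastforce
      show "- int l - 1 < N" unfolding l_def by linarith
    qed
    finally show "proj1 T s (polymul sc T A 0 0 l) a b = proj1 T s (polymul sc T B 0 0 l) a b"
      unfolding polymul_proj[symmetric] deltaA_polymul[where X="proj1 T s A", symmetric]
        deltaB_polymul[where Y="proj1 T s B", symmetric]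
      by simp
  qed
  then show ?thesis by (intro exI[of _ l] proj_ext[OF T]) blast
qed

lemma C2_imp_F:
  assumes T: "0 < T" and lA: "laurent2 A" and lB: "laurent2 (\<lambda>b a. B a b)"
    and C2: "isC2 sc T A B C Cs"
  shows "\<exists>G p r k. isF sc T A B C G p r k"
proof -
  obtain l where "polymul sc T A 0 0 l = polymul sc T B 0 0 l"
    using C2_imp_locality[OF T C2] by blast
  then obtain G p r where G: "psupp G" "iota12 sc T G p r l = A" "iota21 sc T G p r l = B"
    using locality_gives_F[OF T lA lB] by blast
  have "C = iota2d sc T G p r l"
    using components_sum_to_C[OF T G(1)] C2_components_unique[OF T G C2] C2
    unfolding isC2_def by blast
  then show ?thesis using G unfolding isF_def by blast
qed

lemma C3_imp_F:
  assumes T: "0 < T" and lA: "laurent2 A" and lB: "laurent2 (\<lambda>b a. B a b)"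
    and C3: "isC3 sc T A B C Cs"
  shows "\<exists>G p r k. isF sc T A B C G p r k"
proof -
  obtain l where "polymul sc T A 0 0 l = polymul sc T B 0 0 l"
    using C3 unfolding isC3_def by blast
  then obtain G p r where G: "psupp G" "iota12 sc T G p r l = A" "iota21 sc T G p r l = B"
    using locality_gives_F[OF T lA lB] by blast
  have "C = iota2d sc T G p r l"
    using components_sum_to_C[OF T G(1)] C3_components_unique[OF T G(1,2) lA C3] C3
    unfolding isC3_def by blast
  then show ?thesis using G unfolding isF_def by blast
qed

section \<open>Uniqueness\<close>

text \<open>F is determined by A: two representatives both give A under iota_{x1,x2}, so
  x1^{p/T} x2^{r/T} (x1-x2)^k A recovers each of them.\<close>

lemma F_unique:
  assumes T: "0 < T" and F: "isF sc T A B C G p r k" and F': "isF sc T A B C G' p' r' k'"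
  shows "Feq sc T G p r k G' p' r' k'"
proof -
  have G: "psupp G" "iota12 sc T G p r k = A" and G': "psupp G'" "iota12 sc T G' p' r' k' = A"
    using F F' unfolding isF_def by auto
  have "polymul sc T A p r k = G" using polymul_iota12[OF G(1) T, of p r k] G(2) by simp
  moreover have "polymul sc T A p' r' k' = G'" using polymul_iota12[OF G'(1) T, of p' r' k'] G'(2) by simp
  ultimately show ?thesis unfolding Feq_def using polymul_comm by metis
qed

lemma components_unique:
  assumes T: "0 < T" and lA: "laurent2 A" and F: "isF sc T A B C G p r k"
    and CC: "isC2 sc T A B C Cs \<or> isC3 sc T A B C Cs"
  shows "\<forall>s<T. Cs s = CsF sc T G p r k s"
  using CC C2_components_unique[OF T] C3_components_unique[OF T _ _ lA] F
  unfolding isF_def by blast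

end

theorem mainTheorem1:
  fixes sc :: "complex \<Rightarrow> 'm::ab_group_add \<Rightarrow> 'm"
    and T :: nat
    and A B C :: "int \<Rightarrow> int \<Rightarrow> 'm"
  assumes "vector_space sc"
    and "T > 0"
    and "laurent2 A"
    and "laurent2 (\<lambda>b a. B a b)"
    and "laurent2 C"
  shows "((\<exists>G p r k. isF sc T A B C G p r k) \<longleftrightarrow> (\<exists>Cs. isC2 sc T A B C Cs))
    \<and> ((\<exists>Cs. isC2 sc T A B C Cs) \<longleftrightarrow> (\<exists>Cs. isC3 sc T A B C Cs))
    \<and> (\<forall>G p r k G' p' r' k'. isF sc T A B C G p r k \<and> isF sc T A B C G' p' r' k'
          \<longrightarrow> Feq sc T G p r k G' p' r' k')
    \<and> (\<forall>Cs Cs'. (isC2 sc T A B C Cs \<or> isC3 sc T A B C Cs)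
          \<and> (isC2 sc T A B C Cs' \<or> isC3 sc T A B C Cs')
          \<longrightarrow> (\<forall>s<T. Cs s = Cs' s))"
proof -
  note vs = assms(1) and T = assms(2) and lA = assms(3) and lB = assms(4)
  have F_iff_C2: "(\<exists>G p r k. isF sc T A B C G p r k) \<longleftrightarrow> (\<exists>Cs. isC2 sc T A B C Cs)"
    using F_imp_C2[OF vs T] C2_imp_F[OF vs T lA lB] by blast
  have F_iff_C3: "(\<exists>G p r k. isF sc T A B C G p r k) \<longleftrightarrow> (\<exists>Cs. isC3 sc T A B C Cs)"
    using F_imp_C3[OF vs T] C3_imp_F[OF vs T lA lB] by blast
  have C_unique: "\<forall>s<T. Cs s = Cs' s"
    if CC: "isC2 sc T A B C Cs \<or> isC3 sc T A B C Cs"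
      and CC': "isC2 sc T A B C Cs' \<or> isC3 sc T A B C Cs'" for Cs Cs'
  proof -
    obtain G p r k where F: "isF sc T A B C G p r k"
      using CC F_iff_C2 F_iff_C3 by blast
    show ?thesis using components_unique[OF vs T lA F] CC CC' by auto
  qed
  show ?thesis
    using F_iff_C2 F_iff_C3 F_unique[OF vs T] C_unique by blast
qed

end
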